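(* Let $E$ be a locally complete lcHs over $\mathbb{C}$, $z_0\in\mathbb{C}$ and $r\in(0,\infty]$. Then $\Bigl(f\mapsto\sum_{n=0}^k\frac{(\partial^n_{\mathbb{C}})^Ef(z_0)}{n!}(\cdot-z_0)^n\Bigr)_{k\in\mathbb{N}_0}$ is a Schauder decomposition of $\mathcal{O}(\mathbb{D}_r(z_0),E)$ and \[ f=\sum_{n=0}^\infty\frac{(\partial^n_{\mathbb{C}})^Ef(z_0)}{n!}(\cdot-z_0)^n,\quad f\in\mathcal{O}(\mathbb{D}_r(z_0),E), \] with convergence in $\mathcal{O}(\mathbb{D}_r(z_0),E)$.
   Context: An lcHs $E$ is locally complete if for every closed bounded absolutely convex $D\subset E$ the space $E_D=\bigcup_n nD$ normed by the gauge of $D$ is a Banach space. $\mathbb{D}_r(z_0)$ is the open disc of radius $r$ about $z_0$. $\mathcal{O}(\Omega,E)$ is the space of $f\colon\Omega\to E$ for which $(\partial^1_{\mathbb{C}})^Ef(z):=\lim_{h\to0,h\in\mathbb{C}\setminus\{0\}}(f(z+h)-f(z))/h$ exists in $E$ for every $z\in\Omega$, with higher complex derivatives $(\partial^0_{\mathbb{C}})^Ef:=f$, $(\partial^{n+1}_{\mathbb{C}})^Ef:=(\partial^1_{\mathbb{C}})^E((\partial^n_{\mathbb{C}})^Ef)$; it carries the seminorms $\sup_{z\in K}p_\alpha(f(z))$, $K\subset\Omega$ compact, $(p_\alpha)$ seminorms of $E$. A Schauder decomposition of an lcHs $X$ is a sequence of continuous linear projections $P_k$ with $P_kP_j=P_{\min(j,k)}$,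 $P_k\ne P_j$ for $k\ne j$, and $P_kx\to x$ for all $x$. *)

theory Defs
  imports "HOL-Analysis.Analysis"
begin

text \<open>Complex vector spaces are modelled by an additive group type 'a together with a
scalar multiplication smul satisfying the axioms of the library locale vector_space.
Locally convex topologies are given by families of seminorms.\<close>

definition seminorm :: "(complex \<Rightarrow> 'a::ab_group_add \<Rightarrow> 'a) \<Rightarrow> ('a \<Rightarrow> real) \<Rightarrow> bool" where
  "seminorm smul p \<longleftrightarrow> (\<forall>x y. p (x + y) \<le> p x + p y) \<and> (\<forall>c x. p (smul c x) = cmod c * p x)"

text \<open>Topology on a carrier S induced by a family D of pseudometrics (used both for the
seminorm topology of E, with D = {(x,y) |-> p(x - y)}, and for the topology of
compact convergence on O(Omega,E)).\<close>

definition pm_topology :: "'a set \<Rightarrow> ('a \<Rightarrow> 'a \<Rightarrow> real) set \<Rightarrow> 'a topology" where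
  "pm_topology S D = topology (\<lambda>U. U \<subseteq> S \<and> (\<forall>x\<in>U. \<exists>F e. finite F \<and> F \<subseteq> D \<and> e > 0 \<and>
       {y \<in> S. \<forall>d\<in>F. d x y < e} \<subseteq> U))"

definition sn_topology :: "('a::ab_group_add \<Rightarrow> real) set \<Rightarrow> 'a topology" where
  "sn_topology P = pm_topology UNIV ((\<lambda>p x y. p (x - y)) ` P)"

definition lcHs :: "(complex \<Rightarrow> 'a::ab_group_add \<Rightarrow> 'a) \<Rightarrow> ('a \<Rightarrow> real) set \<Rightarrow> bool" where
  "lcHs smul P \<longleftrightarrow> vector_space smul \<and> (\<forall>p\<in>P. seminorm smul p) \<and>
     (\<forall>x. x \<noteq> 0 \<longrightarrow> (\<exists>p\<in>P. p x \<noteq> 0))"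

definition lc_bounded :: "('a \<Rightarrow> real) set \<Rightarrow> 'a set \<Rightarrow> bool" where
  "lc_bounded P B \<longleftrightarrow> (\<forall>p\<in>P. bdd_above (p ` B))"

definition abs_convex :: "(complex \<Rightarrow> 'a::ab_group_add \<Rightarrow> 'a) \<Rightarrow> 'a set \<Rightarrow> bool" where
  "abs_convex smul B \<longleftrightarrow> (\<forall>x\<in>B. \<forall>y\<in>B. \<forall>a b. cmod a + cmod b \<le> 1 \<longrightarrow> smul a x + smul b y \<in> B)"

definition span_set :: "(complex \<Rightarrow> 'a \<Rightarrow> 'a) \<Rightarrow> 'a set \<Rightarrow> 'a set" where
  "span_set smul B = {x. \<exists>n::nat. \<exists>b\<in>B. x = smul (of_nat n) b}"

definition gauge :: "(complex \<Rightarrow> 'a \<Rightarrow> 'a) \<Rightarrow> 'a set \<Rightarrow> 'a \<Rightarrow> real" where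
  "gauge smul B x = Inf {t::real. t > 0 \<and> x \<in> smul (complex_of_real t) ` B}"

definition banach_gauge :: "(complex \<Rightarrow> 'a::ab_group_add \<Rightarrow> 'a) \<Rightarrow> 'a set \<Rightarrow> bool" where
  "banach_gauge smul B \<longleftrightarrow>
     (\<forall>x\<in>span_set smul B. gauge smul B x = 0 \<longrightarrow> x = 0) \<and>
     (\<forall>x. (\<forall>n. x n \<in> span_set smul B) \<longrightarrow>
          (\<forall>e>0. \<exists>N. \<forall>m\<ge>N. \<forall>n\<ge>N. gauge smul B (x m - x n) < e) \<longrightarrow>
          (\<exists>y\<in>span_set smul B. (\<lambda>n. gauge smul B (x n - y)) \<longlonglongrightarrow> 0))"

definition locally_complete :: "(complex \<Rightarrow> 'a::ab_group_add \<Rightarrow> 'a) \<Rightarrow> ('a \<Rightarrow> real) set \<Rightarrow> bool" where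
  "locally_complete smul P \<longleftrightarrow>
     (\<forall>B. closedin (sn_topology P) B \<and> lc_bounded P B \<and> abs_convex smul B \<longrightarrow> banach_gauge smul B)"

definition has_cderiv :: "(complex \<Rightarrow> 'a::ab_group_add \<Rightarrow> 'a) \<Rightarrow> ('a \<Rightarrow> real) set \<Rightarrow>
    (complex \<Rightarrow> 'a) \<Rightarrow> complex \<Rightarrow> 'a \<Rightarrow> bool" where
  "has_cderiv smul P f z d \<longleftrightarrow>
     limitin (sn_topology P) (\<lambda>h. smul (inverse h) (f (z + h) - f z)) d (at 0)"

definition cderiv :: "(complex \<Rightarrow> 'a::ab_group_add \<Rightarrow> 'a) \<Rightarrow> ('a \<Rightarrow> real) set \<Rightarrow>
    (complex \<Rightarrow> 'a) \<Rightarrow> complex \<Rightarrow> 'a" where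
  "cderiv smul P f z = (THE d. has_cderiv smul P f z d)"

fun cderiv_n :: "(complex \<Rightarrow> 'a::ab_group_add \<Rightarrow> 'a) \<Rightarrow> ('a \<Rightarrow> real) set \<Rightarrow> nat \<Rightarrow>
    (complex \<Rightarrow> 'a) \<Rightarrow> complex \<Rightarrow> 'a" where
  "cderiv_n smul P 0 f = f"
| "cderiv_n smul P (Suc n) f = cderiv smul P (cderiv_n smul P n f)"

text \<open>O(Omega,E): functions Omega -> E, represented as functions on the whole plane that
vanish outside Omega, which are complex differentiable at every point of Omega.\<close>

definition holo :: "(complex \<Rightarrow> 'a::ab_group_add \<Rightarrow> 'a) \<Rightarrow> ('a \<Rightarrow> real) set \<Rightarrow> complex set \<Rightarrow>
    (complex \<Rightarrow> 'a) set" where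
  "holo smul P \<Omega> = {f. (\<forall>z\<in>\<Omega>. \<exists>d. has_cderiv smul P f z d) \<and> (\<forall>z. z \<notin> \<Omega> \<longrightarrow> f z = 0)}"

definition holo_topology :: "(complex \<Rightarrow> 'a::ab_group_add \<Rightarrow> 'a) \<Rightarrow> ('a \<Rightarrow> real) set \<Rightarrow> complex set \<Rightarrow>
    (complex \<Rightarrow> 'a) topology" where
  "holo_topology smul P \<Omega> = pm_topology (holo smul P \<Omega>)
     {(\<lambda>f g. SUP z\<in>K. p (f z - g z)) | K p. compact K \<and> K \<noteq> {} \<and> K \<subseteq> \<Omega> \<and> p \<in> P}"

definition lin_on :: "(complex \<Rightarrow> 'a::ab_group_add \<Rightarrow> 'a) \<Rightarrow> (complex \<Rightarrow> 'a) set \<Rightarrow>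
    ((complex \<Rightarrow> 'a) \<Rightarrow> (complex \<Rightarrow> 'a)) \<Rightarrow> bool" where
  "lin_on smul S Q \<longleftrightarrow> (\<forall>f\<in>S. \<forall>g\<in>S. \<forall>a b.
      Q (\<lambda>z. smul a (f z) + smul b (g z)) = (\<lambda>z. smul a (Q f z) + smul b (Q g z)))"

definition schauder_decomposition :: "(complex \<Rightarrow> 'a::ab_group_add \<Rightarrow> 'a) \<Rightarrow> (complex \<Rightarrow> 'a) set \<Rightarrow>
    (complex \<Rightarrow> 'a) topology \<Rightarrow> (nat \<Rightarrow> (complex \<Rightarrow> 'a) \<Rightarrow> (complex \<Rightarrow> 'a)) \<Rightarrow> bool" where
  "schauder_decomposition smul S T Q \<longleftrightarrow>
     (\<forall>k. continuous_map T T (Q k) \<and> lin_on smul S (Q k)) \<and>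
     (\<forall>k j. \<forall>f\<in>S. Q k (Q j f) = Q (min j k) f) \<and>
     (\<forall>k j. k \<noteq> j \<longrightarrow> (\<exists>f\<in>S. Q k f \<noteq> Q j f)) \<and>
     (\<forall>f\<in>S. limitin T (\<lambda>k. Q k f) f sequentially)"

definition disc :: "complex \<Rightarrow> ereal \<Rightarrow> complex set" where
  "disc z0 r = {z. ereal (cmod (z - z0)) < r}"

definition taylor_proj :: "(complex \<Rightarrow> 'a::ab_group_add \<Rightarrow> 'a) \<Rightarrow> ('a \<Rightarrow> real) set \<Rightarrow>
    complex \<Rightarrow> ereal \<Rightarrow> nat \<Rightarrow> (complex \<Rightarrow> 'a) \<Rightarrow> (complex \<Rightarrow> 'a)" where
  "taylor_proj smul P z0 r k f = (\<lambda>z. if z \<in> disc z0 r then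
      (\<Sum>n\<le>k. smul ((z - z0) ^ n / of_nat (fact n)) (cderiv_n smul P n f z0)) else 0)"

end

theory Submission
  imports Defs "HOL-Complex_Analysis.Complex_Analysis"
begin

text \<open>Everything is reduced to scalar complex analysis through dominated functionals: by Hahn--Banach,
  for every seminorm \<open>p\<close> and vector \<open>x\<close> there is a linear \<open>\<phi>\<close> with \<open>|\<phi>| \<le> p\<close> and \<open>|\<phi> x| = p x\<close>,
  and \<open>\<phi> \<circ> f\<close> is holomorphic whenever \<open>f\<close> is. The only step that does not transfer this way is that
  the derivative of an \<open>E\<close>-valued holomorphic function is again holomorphic, since \<open>E\<close> need not be
  complete: there the Cauchy estimates for the functions \<open>\<phi> \<circ> f\<close> show that the difference quotients
  of \<open>f'\<close> lie in a closed bounded absolutely convex set \<open>B\<close> and are Lipschitz for its gauge, so they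
  converge in the Banach space \<open>E\<^sub>B\<close>. Once all derivatives exist, the Cauchy estimates on a disc
  \<open>\<bar>z - z\<^sub>0\<bar> \<le> \<rho>\<close> bound the Taylor remainder on \<open>\<bar>z - z\<^sub>0\<bar> \<le> s < \<rho>\<close> geometrically in \<open>s/\<rho>\<close>
  and the \<open>k\<close>-th Taylor polynomial by \<open>k + 1\<close> times the supremum, which gives convergence and
  continuity of the projections.\<close>

section \<open>Topologies defined by families of pseudometrics\<close>

lemma pm_neighbourhood_Int:
  fixes D :: "('a \<Rightarrow> 'a \<Rightarrow> real) set"
  assumes "finite F1" "F1 \<subseteq> D" "e1 > 0" "{y \<in> S. \<forall>d\<in>F1. d x y < e1} \<subseteq> A"
    and "finite F2" "F2 \<subseteq> D" "e2 > 0" "{y \<in> S. \<forall>d\<in>F2. d x y < e2} \<subseteq> B"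
  shows "\<exists>F e. finite F \<and> F \<subseteq> D \<and> e > 0 \<and> {y \<in> S. \<forall>d\<in>F. d x y < e} \<subseteq> A \<inter> B"
proof (intro exI[of _ "F1 \<union> F2"] exI[of _ "min e1 e2"] conjI)
  show "{y \<in> S. \<forall>d\<in>F1 \<union> F2. d x y < min e1 e2} \<subseteq> A \<inter> B"
  proof
    fix y assume "y \<in> {y \<in> S. \<forall>d\<in>F1 \<union> F2. d x y < min e1 e2}"
    then have "y \<in> {y \<in> S. \<forall>d\<in>F1. d x y < e1}" "y \<in> {y \<in> S. \<forall>d\<in>F2. d x y < e2}" by auto
    then show "y \<in> A \<inter> B" using assms(4,8) by blast
  qed
qed (use assms in simp_all)

lemma pm_neighbourhood_INT:
  fixes D :: "('a \<Rightarrow> 'a \<Rightarrow> real) set"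
  assumes "finite I"
    and "\<And>i. i \<in> I \<Longrightarrow> \<exists>F e. finite F \<and> F \<subseteq> D \<and> e > 0 \<and> {y \<in> S. \<forall>d\<in>F. d x y < e} \<subseteq> U i"
  shows "\<exists>F e. finite F \<and> F \<subseteq> D \<and> e > 0 \<and> {y \<in> S. \<forall>d\<in>F. d x y < e} \<subseteq> (\<Inter>i\<in>I. U i)"
  using assms
proof (induction I rule: finite_induct)
  case empty
  show ?case by (intro exI[of _ "{}"] exI[of _ 1]) simp
next
  case (insert i I)
  have "\<exists>F e. finite F \<and> F \<subseteq> D \<and> e > 0 \<and> {y \<in> S. \<forall>d\<in>F. d x y < e} \<subseteq> U i"
    by (rule insert.prems) simp
  moreover have "\<exists>F e. finite F \<and> F \<subseteq> D \<and> e > 0 \<and> {y \<in> S. \<forall>d\<in>F. d x y < e} \<subseteq> (\<Inter>i\<in>I. U i)"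
    by (rule insert.IH) (rule insert.prems, simp)
  ultimately show ?case
    by (elim exE conjE) (drule (7) pm_neighbourhood_Int, simp)
qed

lemma istopology_pm:
  fixes D :: "('a \<Rightarrow> 'a \<Rightarrow> real) set"
  shows "istopology (\<lambda>U. U \<subseteq> S \<and> (\<forall>x\<in>U. \<exists>F e. finite F \<and> F \<subseteq> D \<and> e > 0 \<and>
       {y \<in> S. \<forall>d\<in>F. d x y < e} \<subseteq> U))"
  unfolding istopology_def
proof (rule conjI; intro allI impI)
  fix A B
  assume A: "A \<subseteq> S \<and> (\<forall>x\<in>A. \<exists>F e. finite F \<and> F \<subseteq> D \<and> e > 0 \<and> {y \<in> S. \<forall>d\<in>F. d x y < e} \<subseteq> A)"
    and B: "B \<subseteq> S \<and> (\<forall>x\<in>B. \<exists>F e. finite F \<and> F \<subseteq> D \<and> e > 0 \<and> {y \<in> S. \<forall>d\<in>F. d x y < e} \<subseteq> B)"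
  show "A \<inter> B \<subseteq> S \<and> (\<forall>x\<in>A \<inter> B. \<exists>F e. finite F \<and> F \<subseteq> D \<and> e > 0 \<and>
      {y \<in> S. \<forall>d\<in>F. d x y < e} \<subseteq> A \<inter> B)"
  proof (intro conjI ballI)
    show "A \<inter> B \<subseteq> S" using A by blast
    fix x assume x: "x \<in> A \<inter> B"
    from x A obtain F1 e1 where "finite F1" "F1 \<subseteq> D" "e1 > 0" "{y \<in> S. \<forall>d\<in>F1. d x y < e1} \<subseteq> A"
      by auto
    moreover from x B obtain F2 e2 where "finite F2" "F2 \<subseteq> D" "e2 > 0" "{y \<in> S. \<forall>d\<in>F2. d x y < e2} \<subseteq> B"
      by auto
    ultimately show "\<exists>F e. finite F \<and> F \<subseteq> D \<and> e > 0 \<and> {y \<in> S. \<forall>d\<in>F. d x y < e} \<subseteq> A \<inter> B"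
      by (rule pm_neighbourhood_Int)
  qed
next
  fix K :: "'a set set"
  assume K: "\<forall>A\<in>K. A \<subseteq> S \<and> (\<forall>x\<in>A. \<exists>F e. finite F \<and> F \<subseteq> D \<and> e > 0 \<and> {y \<in> S. \<forall>d\<in>F. d x y < e} \<subseteq> A)"
  show "\<Union>K \<subseteq> S \<and> (\<forall>x\<in>\<Union>K. \<exists>F e. finite F \<and> F \<subseteq> D \<and> e > 0 \<and> {y \<in> S. \<forall>d\<in>F. d x y < e} \<subseteq> \<Union>K)"
  proof (intro conjI ballI)
    show "\<Union>K \<subseteq> S" using K by blast
    fix x assume "x \<in> \<Union>K"
    then obtain A where A: "A \<in> K" "x \<in> A" by blast
    then have "\<exists>F e. finite F \<and> F \<subseteq> D \<and> e > 0 \<and> {y \<in> S. \<forall>d\<in>F. d x y < e} \<subseteq> A"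
      using K by simp
    then obtain F e where "finite F" "F \<subseteq> D" "e > 0" "{y \<in> S. \<forall>d\<in>F. d x y < e} \<subseteq> A"
      by blast
    then show "\<exists>F e. finite F \<and> F \<subseteq> D \<and> e > 0 \<and> {y \<in> S. \<forall>d\<in>F. d x y < e} \<subseteq> \<Union>K"
      using A(1) by blast
  qed
qed

lemma openin_pm_topology:
  "openin (pm_topology S D) U \<longleftrightarrow> U \<subseteq> S \<and> (\<forall>x\<in>U. \<exists>F e. finite F \<and> F \<subseteq> D \<and> e > 0 \<and>
       {y \<in> S. \<forall>d\<in>F. d x y < e} \<subseteq> U)"
  unfolding pm_topology_def by (subst topology_inverse'[OF istopology_pm]) (rule refl)

lemma topspace_pm_topology [simp]: "topspace (pm_topology S D) = S"
proof -
  have "openin (pm_topology S D) S" unfolding openin_pm_topology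
  proof (intro conjI ballI subset_refl)
    fix x assume "x \<in> S"
    show "\<exists>F e. finite F \<and> F \<subseteq> D \<and> e > 0 \<and> {y \<in> S. \<forall>d\<in>F. d x y < e} \<subseteq> S"
      by (rule exI[of _ "{}"], rule exI[of _ 1]) auto
  qed
  moreover have "\<And>U. openin (pm_topology S D) U \<Longrightarrow> U \<subseteq> S" unfolding openin_pm_topology by blast
  ultimately show ?thesis unfolding topspace_def by blast
qed

lemma limitin_pm_topologyI:
  assumes "l \<in> S" "eventually (\<lambda>x. f x \<in> S) F"
    and "\<And>d e. d \<in> D \<Longrightarrow> e > 0 \<Longrightarrow> eventually (\<lambda>x. d l (f x) < e) F"
  shows "limitin (pm_topology S D) f l F"
  unfolding limitin_def topspace_pm_topology
proof (intro conjI allI impI)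
  show "l \<in> S" by fact
  fix U assume "openin (pm_topology S D) U \<and> l \<in> U"
  then obtain G e where G: "finite G" "G \<subseteq> D" "e > 0" "{y \<in> S. \<forall>d\<in>G. d l y < e} \<subseteq> U"
    unfolding openin_pm_topology by blast
  have "eventually (\<lambda>x. \<forall>d\<in>G. d l (f x) < e) F"
    using G assms(3) by (simp add: eventually_ball_finite subset_iff)
  with assms(2) show "eventually (\<lambda>x. f x \<in> U) F"
    by eventually_elim (use G(4) in blast)
qed

lemma continuous_map_pm_topologyI:
  assumes maps: "g ` S \<subseteq> S'"
    and local: "\<And>x d e. x \<in> S \<Longrightarrow> d \<in> D' \<Longrightarrow> e > 0 \<Longrightarrow> \<exists>G \<delta>. finite G \<and> G \<subseteq> D \<and> \<delta> > 0 \<and>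
        {y \<in> S. \<forall>d'\<in>G. d' x y < \<delta>} \<subseteq> {y. d (g x) (g y) < e}"
  shows "continuous_map (pm_topology S D) (pm_topology S' D') g"
  unfolding continuous_map topspace_pm_topology
proof (intro conjI allI impI maps)
  fix U assume U: "openin (pm_topology S' D') U"
  show "openin (pm_topology S D) {x \<in> S. g x \<in> U}"
    unfolding openin_pm_topology
  proof (intro conjI ballI)
    fix x assume "x \<in> {x \<in> S. g x \<in> U}"
    then have x: "x \<in> S" "g x \<in> U" by auto
    then obtain F e where F: "finite F" "F \<subseteq> D'" "e > 0" and FU: "{y \<in> S'. \<forall>d\<in>F. d (g x) y < e} \<subseteq> U"
      using U unfolding openin_pm_topology by blast
    have "\<exists>G \<delta>. finite G \<and> G \<subseteq> D \<and> \<delta> > 0 \<and>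
        {y \<in> S. \<forall>d'\<in>G. d' x y < \<delta>} \<subseteq> (\<Inter>d\<in>F. {y. d (g x) (g y) < e})"
    proof (rule pm_neighbourhood_INT[OF F(1)])
      fix d assume "d \<in> F"
      then have "d \<in> D'" using F(2) by blast
      then show "\<exists>G \<delta>. finite G \<and> G \<subseteq> D \<and> \<delta> > 0 \<and> {y \<in> S. \<forall>d'\<in>G. d' x y < \<delta>} \<subseteq> {y. d (g x) (g y) < e}"
        by (rule local[OF x(1) _ F(3)])
    qed
    then obtain G \<delta> where G: "finite G" "G \<subseteq> D" "\<delta> > 0"
      and G\<delta>: "{y \<in> S. \<forall>d'\<in>G. d' x y < \<delta>} \<subseteq> (\<Inter>d\<in>F. {y. d (g x) (g y) < e})"
      by blast
    have "{y \<in> S. \<forall>d'\<in>G. d' x y < \<delta>} \<subseteq> {x \<in> S. g x \<in> U}"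
    proof
      fix y assume y: "y \<in> {y \<in> S. \<forall>d'\<in>G. d' x y < \<delta>}"
      then have "y \<in> (\<Inter>d\<in>F. {y. d (g x) (g y) < e})" by (rule subsetD[OF G\<delta>])
      moreover have "g y \<in> S'" using maps y by auto
      ultimately have "g y \<in> {y \<in> S'. \<forall>d\<in>F. d (g x) y < e}" by simp
      then show "y \<in> {x \<in> S. g x \<in> U}" using FU y by blast
    qed
    then show "\<exists>G e. finite G \<and> G \<subseteq> D \<and> e > 0 \<and> {y \<in> S. \<forall>d\<in>G. d x y < e} \<subseteq> {x \<in> S. g x \<in> U}"
      using G by blast
  qed blast
qed

section \<open>Locally convex Hausdorff spaces\<close>

locale lchs = vector_space smul for smul :: "complex \<Rightarrow> 'a::ab_group_add \<Rightarrow> 'a" +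
  fixes P :: "('a \<Rightarrow> real) set"
  assumes seminorm: "p \<in> P \<Longrightarrow> seminorm smul p"
    and separating: "x \<noteq> 0 \<Longrightarrow> \<exists>p\<in>P. p x \<noteq> 0"
begin

context
  fixes p assumes p: "p \<in> P"
begin

lemma p_add: "p (x + y) \<le> p x + p y"
  using seminorm[OF p] unfolding seminorm_def by blast

lemma p_smul: "p (smul c x) = cmod c * p x"
  using seminorm[OF p] unfolding seminorm_def by blast

lemma p_zero [simp]: "p 0 = 0"
  using p_smul[of 0 0] by simp

lemma p_minus: "p (- x) = p x"
  using p_smul[of "-1" x] by simp

lemma p_nonneg: "p x \<ge> 0"
  using p_add[of x "- x"] by (simp add: p_minus)

lemma p_diff_commute: "p (x - y) = p (y - x)"
  using p_minus[of "x - y"] by simp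

lemma p_triangle: "p (x - z) \<le> p (x - y) + p (y - z)"
  using p_add[of "x - y" "y - z"] by simp

lemma p_abs_diff_le: "\<bar>p x - p y\<bar> \<le> p (x - y)"
  using p_add[of "x - y" y] p_add[of "y - x" x] by (simp add: p_diff_commute)

lemma p_lincomb_le: "p (smul a x + smul b y) \<le> cmod a * p x + cmod b * p y"
  using p_add[of "smul a x" "smul b y"] by (simp add: p_smul)

end

lemma eq_if_seminorms_vanish: "(\<And>p. p \<in> P \<Longrightarrow> p (x - y) = 0) \<Longrightarrow> x = y"
  using separating[of "x - y"] by auto

lemma openin_sn_topology_ball:
  assumes p: "p \<in> P"
  shows "openin (sn_topology P) {y. p (y - l) < e}"
  unfolding sn_topology_def openin_pm_topology
proof (intro conjI ballI subset_UNIV)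
  fix y assume "y \<in> {y. p (y - l) < e}"
  then have "e - p (y - l) > 0" by simp
  moreover have "{z \<in> UNIV. \<forall>d\<in>{\<lambda>x y. p (x - y)}. d y z < e - p (y - l)} \<subseteq> {y. p (y - l) < e}"
  proof
    fix z assume "z \<in> {z \<in> UNIV. \<forall>d\<in>{\<lambda>x y. p (x - y)}. d y z < e - p (y - l)}"
    then have "p (z - y) < e - p (y - l)" by (simp add: p_diff_commute[OF p, of y])
    then show "z \<in> {y. p (y - l) < e}" using p_triangle[OF p, of z l y] by simp
  qed
  ultimately show "\<exists>F e'. finite F \<and> F \<subseteq> (\<lambda>p x y. p (x - y)) ` P \<and> e' > 0 \<and>
      {z \<in> UNIV. \<forall>d\<in>F. d y z < e'} \<subseteq> {y. p (y - l) < e}"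
    using p by (intro exI[of _ "{\<lambda>x y. p (x - y)}"] exI[of _ "e - p (y - l)"]) auto
qed

lemma limitin_sn_topology_iff:
  "limitin (sn_topology P) f l F \<longleftrightarrow> (\<forall>p\<in>P. \<forall>e>0. eventually (\<lambda>x. p (f x - l) < e) F)"
proof
  assume L: "limitin (sn_topology P) f l F"
  show "\<forall>p\<in>P. \<forall>e>0. eventually (\<lambda>x. p (f x - l) < e) F"
  proof (intro ballI allI impI)
    fix p and e :: real assume p: "p \<in> P" and e: "e > 0"
    have "l \<in> {y. p (y - l) < e}" using e p by simp
    then have "eventually (\<lambda>x. f x \<in> {y. p (y - l) < e}) F"
      using L openin_sn_topology_ball[OF p] unfolding limitin_def by blast
    then show "eventually (\<lambda>x. p (f x - l) < e) F" by simp
  qed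
next
  assume R: "\<forall>p\<in>P. \<forall>e>0. eventually (\<lambda>x. p (f x - l) < e) F"
  show "limitin (sn_topology P) f l F"
    unfolding sn_topology_def
  proof (rule limitin_pm_topologyI)
    fix d and e :: real assume "d \<in> (\<lambda>p x y. p (x - y)) ` P" "e > 0"
    then obtain p where p: "p \<in> P" and d: "d = (\<lambda>x y. p (x - y))" by blast
    have "eventually (\<lambda>x. p (f x - l) < e) F" using R p \<open>e > 0\<close> by blast
    then show "eventually (\<lambda>x. d l (f x) < e) F"
      by eventually_elim (simp add: d p_diff_commute[OF p])
  qed auto
qed

lemma limitin_sn_lincomb:
  assumes "limitin (sn_topology P) f l F" "limitin (sn_topology P) g m F"
  shows "limitin (sn_topology P) (\<lambda>x. smul a (f x) + smul b (g x)) (smul a l + smul b m) F"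
  unfolding limitin_sn_topology_iff
proof (intro ballI allI impI)
  fix p and e :: real assume p: "p \<in> P" and e: "e > 0"
  define e' where "e' = e / (cmod a + cmod b + 1)"
  have ab: "cmod a + cmod b + 1 > 0" by (simp add: add_nonneg_pos)
  then have e': "e' > 0" "(cmod a + cmod b) * e' < e"
    using e by (simp_all add: e'_def field_simps)
  have "eventually (\<lambda>x. p (f x - l) < e') F" "eventually (\<lambda>x. p (g x - m) < e') F"
    using assms p e'(1) unfolding limitin_sn_topology_iff by blast+
  then show "eventually (\<lambda>x. p (smul a (f x) + smul b (g x) - (smul a l + smul b m)) < e) F"
  proof eventually_elim
    case (elim x)
    have "smul a (f x) + smul b (g x) - (smul a l + smul b m) = smul a (f x - l) + smul b (g x - m)"
      by (simp add: scale_right_diff_distrib algebra_simps)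
    moreover have "cmod a * p (f x - l) + cmod b * p (g x - m) \<le> (cmod a + cmod b) * e'"
      using elim by (simp add: distrib_right add_mono mult_left_mono)
    ultimately show ?case using p_lincomb_le[OF p, of a "f x - l" b "g x - m"] e'(2) by simp
  qed
qed

lemma has_cderiv_iff:
  "has_cderiv smul P f z d \<longleftrightarrow>
    (\<forall>p\<in>P. \<forall>e>0. eventually (\<lambda>h. p (smul (inverse h) (f (z + h) - f z) - d) < e) (at 0))"
  unfolding has_cderiv_def limitin_sn_topology_iff by (rule refl)

lemma has_cderiv_unique:
  assumes "has_cderiv smul P f z d1" "has_cderiv smul P f z d2"
  shows "d1 = d2"
proof (rule eq_if_seminorms_vanish)
  fix p assume p: "p \<in> P"
  show "p (d1 - d2) = 0"
  proof (rule ccontr)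
    assume "p (d1 - d2) \<noteq> 0"
    then have e: "p (d1 - d2) / 2 > 0" using p_nonneg[OF p, of "d1 - d2"] by simp
    have "eventually (\<lambda>h. p (smul (inverse h) (f (z + h) - f z) - d1) < p (d1 - d2) / 2) (at 0)"
      "eventually (\<lambda>h. p (smul (inverse h) (f (z + h) - f z) - d2) < p (d1 - d2) / 2) (at 0)"
      using assms p e unfolding has_cderiv_iff by blast+
    then have "eventually (\<lambda>h::complex. False) (at 0)"
    proof eventually_elim
      case (elim h)
      let ?q = "smul (inverse h) (f (z + h) - f z)"
      have "p (d1 - d2) \<le> p (d1 - ?q) + p (?q - d2)" by (rule p_triangle[OF p])
      also have "p (d1 - ?q) = p (?q - d1)" by (rule p_diff_commute[OF p])
      finally show False using elim by simp
    qed
    then show False by simp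
  qed
qed

lemma cderiv_eqI: "has_cderiv smul P f z d \<Longrightarrow> cderiv smul P f z = d"
  unfolding cderiv_def using has_cderiv_unique by blast

lemma has_cderiv_lincomb:
  assumes "has_cderiv smul P f z d1" "has_cderiv smul P g z d2"
  shows "has_cderiv smul P (\<lambda>w. smul a (f w) + smul b (g w)) z (smul a d1 + smul b d2)"
proof -
  have "smul (inverse h) (smul a (f (z + h)) + smul b (g (z + h)) - (smul a (f z) + smul b (g z))) =
      smul a (smul (inverse h) (f (z + h) - f z)) + smul b (smul (inverse h) (g (z + h) - g z))" for h
    by (simp add: scale_right_diff_distrib scale_right_distrib scale_left_commute algebra_simps)
  then show ?thesis
    using limitin_sn_lincomb[OF assms[unfolded has_cderiv_def]] unfolding has_cderiv_def by simp
qed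

lemma has_cderiv_const: "has_cderiv smul P (\<lambda>w. c) z 0"
  unfolding has_cderiv_iff by simp

lemma has_cderiv_sum:
  assumes "finite A" "\<And>i. i \<in> A \<Longrightarrow> has_cderiv smul P (f i) z (d i)"
  shows "has_cderiv smul P (\<lambda>w. \<Sum>i\<in>A. f i w) z (\<Sum>i\<in>A. d i)"
  using assms
proof (induction A rule: finite_induct)
  case empty
  then show ?case using has_cderiv_const[of 0 z] by simp
next
  case (insert a A)
  then show ?case
    using has_cderiv_lincomb[of "f a" z "d a" "\<lambda>w. \<Sum>i\<in>A. f i w" "\<Sum>i\<in>A. d i" 1 1] by simp
qed

lemma has_cderiv_scaleC:
  assumes "(u has_field_derivative u') (at z)"
  shows "has_cderiv smul P (\<lambda>w. smul (u w) x) z (smul u' x)"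
  unfolding has_cderiv_iff
proof (intro ballI allI impI)
  fix p and e :: real assume p: "p \<in> P" and e: "e > 0"
  have "((\<lambda>h. (u (z + h) - u z) / h) \<longlongrightarrow> u') (at 0)" using assms unfolding DERIV_def .
  then have "eventually (\<lambda>h. dist ((u (z + h) - u z) / h) u' < e / (p x + 1)) (at 0)"
    using e p_nonneg[OF p, of x] by (intro tendstoD) (auto simp: add_nonneg_pos)
  then show "eventually (\<lambda>h. p (smul (inverse h) (smul (u (z + h)) x - smul (u z) x) - smul u' x) < e) (at 0)"
  proof eventually_elim
    case (elim h)
    have "smul (inverse h) (smul (u (z + h)) x - smul (u z) x) - smul u' x = smul ((u (z + h) - u z) / h - u') x"
      by (simp add: scale_right_diff_distrib divide_inverse algebra_simps)
    moreover have "cmod ((u (z + h) - u z) / h - u') * p x \<le> e / (p x + 1) * p x"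
      using elim p_nonneg[OF p, of x] by (intro mult_right_mono) (auto simp: dist_norm)
    moreover have "e / (p x + 1) * p x < e" using e p_nonneg[OF p, of x] by (simp add: field_simps)
    ultimately show ?case by (simp add: p_smul[OF p])
  qed
qed

lemma has_cderiv_transform_open:
  assumes "has_cderiv smul P f z d" "open D" "z \<in> D" "\<And>w. w \<in> D \<Longrightarrow> f w = g w"
  shows "has_cderiv smul P g z d"
  unfolding has_cderiv_iff
proof (intro ballI allI impI)
  fix p and e :: real assume "p \<in> P" "e > 0"
  then have "eventually (\<lambda>h. p (smul (inverse h) (f (z + h) - f z) - d) < e) (at 0)"
    using assms(1) unfolding has_cderiv_iff by blast
  moreover have "((\<lambda>h. z + h) \<longlongrightarrow> z) (at 0)" by (auto intro!: tendsto_eq_intros)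
  then have "eventually (\<lambda>h. z + h \<in> D) (at 0)" using assms(2,3) by (rule topological_tendstoD)
  ultimately show "eventually (\<lambda>h. p (smul (inverse h) (g (z + h) - g z) - d) < e) (at 0)"
    by eventually_elim (use assms(3,4) in auto)
qed

lemma has_cderiv_imp_isCont:
  assumes "has_cderiv smul P f z d" "p \<in> P"
  shows "isCont (\<lambda>w. p (f w - c)) z"
proof -
  have "eventually (\<lambda>h. p (smul (inverse h) (f (z + h) - f z) - d) < 1) (at 0)"
    using assms unfolding has_cderiv_iff by simp
  moreover have "eventually (\<lambda>h::complex. h \<noteq> 0) (at 0)" by (simp add: eventually_at_filter)
  ultimately have bound: "eventually (\<lambda>h. norm (p (f (z + h) - c) - p (f z - c)) \<le> cmod h * (p d + 1)) (at 0)"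
  proof eventually_elim
    case (elim h)
    define q where "q = smul (inverse h) (f (z + h) - f z)"
    have "f (z + h) - f z = smul h q" using elim(2) by (simp add: q_def)
    then have "p (f (z + h) - f z) = cmod h * p q" by (simp add: p_smul[OF assms(2)])
    also have "\<dots> \<le> cmod h * (p d + 1)"
      using elim(1) p_add[OF assms(2), of "q - d" d] by (intro mult_left_mono) (auto simp: q_def)
    finally show ?case
      using p_abs_diff_le[OF assms(2), of "f (z + h) - c" "f z - c"] by simp
  qed
  have "((\<lambda>h. cmod h * (p d + 1)) \<longlongrightarrow> 0) (at 0)"
    by (auto intro!: tendsto_eq_intros)
  from Lim_null_comparison[OF bound this] show ?thesis
    by (simp add: isCont_def LIM_offset_zero_iff LIM_zero_iff)
qed

lemma has_cderiv_if_quotient_bound: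
  assumes "\<And>p. p \<in> P \<Longrightarrow> \<exists>K. \<forall>h. h \<noteq> 0 \<longrightarrow> cmod h \<le> \<rho> \<longrightarrow> p (smul (inverse h) (f (z + h) - f z) - d) \<le> K * cmod h"
    and "\<rho> > 0"
  shows "has_cderiv smul P f z d"
  unfolding has_cderiv_iff
proof (intro ballI allI impI)
  fix p and e :: real assume p: "p \<in> P" and e: "e > 0"
  obtain K where K: "\<And>h. h \<noteq> 0 \<Longrightarrow> cmod h \<le> \<rho> \<Longrightarrow> p (smul (inverse h) (f (z + h) - f z) - d) \<le> K * cmod h"
    using assms(1)[OF p] by blast
  have "eventually (\<lambda>h::complex. cmod h < min \<rho> (e / (\<bar>K\<bar> + 1))) (at 0)"
    unfolding eventually_at using assms(2) e
    by (intro exI[of _ "min \<rho> (e / (\<bar>K\<bar> + 1))"]) (auto simp: dist_norm)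
  moreover have "eventually (\<lambda>h::complex. h \<noteq> 0) (at 0)" by (simp add: eventually_at_filter)
  ultimately show "eventually (\<lambda>h. p (smul (inverse h) (f (z + h) - f z) - d) < e) (at 0)"
  proof eventually_elim
    case (elim h)
    have "K * cmod h \<le> (\<bar>K\<bar> + 1) * cmod h" by (simp add: mult_right_mono)
    also have "\<dots> < (\<bar>K\<bar> + 1) * (e / (\<bar>K\<bar> + 1))"
      using elim(1) by (intro mult_strict_left_mono) auto
    finally show ?case using K[OF elim(2)] elim(1) by simp
  qed
qed

section \<open>The Hahn--Banach theorem for a single seminorm\<close>

text \<open>A real-linear functional dominated by \<open>p\<close> on a real subspace, represented by its graph.\<close>

definition dominated_graph :: "('a \<Rightarrow> real) \<Rightarrow> ('a \<times> real) set \<Rightarrow> bool" where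
  "dominated_graph p G \<longleftrightarrow>
     (\<forall>x a y b s t. (x, a) \<in> G \<longrightarrow> (y, b) \<in> G \<longrightarrow>
        (smul (of_real s) x + smul (of_real t) y, s * a + t * b) \<in> G) \<and>
     (\<forall>x a b. (x, a) \<in> G \<longrightarrow> (x, b) \<in> G \<longrightarrow> a = b) \<and>
     (\<forall>x a. (x, a) \<in> G \<longrightarrow> a \<le> p x)"

lemma dominated_graph_Union:
  assumes "C \<noteq> {}" "chain\<^sub>\<subseteq> C" "\<And>G. G \<in> C \<Longrightarrow> dominated_graph p G"
  shows "dominated_graph p (\<Union>C)"
proof -
  have both: "\<exists>G\<in>C. u \<in> G \<and> w \<in> G" if "u \<in> \<Union>C" "w \<in> \<Union>C" for u w
    using that assms(2) unfolding chain_subset_def by blast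
  show ?thesis
    unfolding dominated_graph_def
  proof (intro conjI allI impI)
    fix x a y b s t assume "(x, a) \<in> \<Union>C" "(y, b) \<in> \<Union>C"
    then obtain G where "G \<in> C" "(x, a) \<in> G" "(y, b) \<in> G" using both by blast
    then show "(smul (of_real s) x + smul (of_real t) y, s * a + t * b) \<in> \<Union>C"
      using assms(3) unfolding dominated_graph_def by blast
  next
    fix x a b assume "(x, a) \<in> \<Union>C" "(x, b) \<in> \<Union>C"
    then obtain G where "G \<in> C" "(x, a) \<in> G" "(x, b) \<in> G" using both by blast
    then show "a = b" using assms(3) unfolding dominated_graph_def by blast
  next
    fix x a assume "(x, a) \<in> \<Union>C"
    then show "a \<le> p x" using assms(3) unfolding dominated_graph_def by blast
  qed
qed

definition graph_extension :: "('a \<times> real) set \<Rightarrow> 'a \<Rightarrow> real \<Rightarrow> ('a \<times> real) set" where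
  "graph_extension M v c = {(x + smul (of_real t) v, a + t * c) | x a t. (x, a) \<in> M}"

context
  fixes p M assumes p: "p \<in> P" and M: "dominated_graph p M"
begin

lemma dominated_graph_lincomb:
  "(x, a) \<in> M \<Longrightarrow> (y, b) \<in> M \<Longrightarrow> (smul (of_real s) x + smul (of_real t) y, s * a + t * b) \<in> M"
  using M unfolding dominated_graph_def by blast

lemma dominated_graph_unique: "(x, a) \<in> M \<Longrightarrow> (x, b) \<in> M \<Longrightarrow> a = b"
  using M unfolding dominated_graph_def by blast

lemma dominated_graph_le: "(x, a) \<in> M \<Longrightarrow> a \<le> p x"
  using M unfolding dominated_graph_def by blast

lemma dominated_graph_scale: "(x, a) \<in> M \<Longrightarrow> (smul (of_real s) x, s * a) \<in> M"
  using dominated_graph_lincomb[of x a x a s 0] by simp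

text \<open>Values \<open>c\<close> within these bounds make the one-step extension \<open>graph_extension M v c\<close> dominated.\<close>

lemma dominated_graph_extension_value:
  assumes "(0, 0) \<in> M"
  obtains c where "\<And>x a. (x, a) \<in> M \<Longrightarrow> a - p (x - v) \<le> c"
    and "\<And>y b. (y, b) \<in> M \<Longrightarrow> c \<le> p (y + v) - b"
proof -
  define L where "L = {a - p (x - v) | x a. (x, a) \<in> M}"
  have key: "a - p (x - v) \<le> p (y + v) - b" if "(x, a) \<in> M" "(y, b) \<in> M" for x a y b
  proof -
    have "a + b \<le> p ((x - v) + (y + v))"
      using dominated_graph_le[OF dominated_graph_lincomb[OF that, of 1 1]] by simp
    also have "\<dots> \<le> p (x - v) + p (y + v)" by (rule p_add[OF p])
    finally show ?thesis by simp
  qed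
  have "bdd_above L" unfolding L_def bdd_above_def using key assms by blast
  moreover have "L \<noteq> {}" using assms unfolding L_def by blast
  ultimately show ?thesis
    by (intro that[of "Sup L"] cSup_upper cSup_least) (auto simp: L_def key)
qed

lemma dominated_graph_extension_le:
  assumes c_ge: "\<And>x a. (x, a) \<in> M \<Longrightarrow> a - p (x - v) \<le> c"
    and c_le: "\<And>y b. (y, b) \<in> M \<Longrightarrow> c \<le> p (y + v) - b"
    and xa: "(x, a) \<in> M"
  shows "a + t * c \<le> p (x + smul (of_real t) v)"
proof -
  consider "t = 0" | "t > 0" | "t < 0" by linarith
  then show ?thesis
  proof cases
    case 1
    then show ?thesis using dominated_graph_le[OF xa] by simp
  next
    case 2
    have "c \<le> p (smul (of_real (1 / t)) x + v) - (1 / t) * a"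
      by (rule c_le[OF dominated_graph_scale[OF xa]])
    also have "smul (of_real (1 / t)) x + v = smul (of_real (1 / t)) (x + smul (of_real t) v)"
      using 2 by (simp add: scale_right_distrib)
    also have "p \<dots> = (1 / t) * p (x + smul (of_real t) v)"
      using 2 by (simp add: p_smul[OF p] norm_divide)
    finally have "t * c \<le> t * ((1 / t) * p (x + smul (of_real t) v) - (1 / t) * a)"
      using 2 by (simp add: mult_left_mono)
    then show ?thesis using 2 by (simp add: algebra_simps)
  next
    case 3
    have "(- 1 / t) * a - p (smul (of_real (- 1 / t)) x - v) \<le> c"
      by (rule c_ge[OF dominated_graph_scale[OF xa]])
    also have "smul (of_real (- 1 / t)) x - v = smul (of_real (- 1 / t)) (x + smul (of_real t) v)"
      using 3 by (simp add: scale_right_distrib)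
    also have "p \<dots> = cmod (of_real (- 1 / t)) * p (x + smul (of_real t) v)"
      by (rule p_smul[OF p])
    also have "cmod (of_real (- 1 / t)) = - 1 / t"
      using 3 by (simp only: norm_of_real) simp
    finally have "(- t) * ((- 1 / t) * a - (- 1 / t) * p (x + smul (of_real t) v)) \<le> (- t) * c"
      using 3 by (simp add: mult_left_mono)
    then show ?thesis using 3 by (simp add: algebra_simps)
  qed
qed

lemma graph_extension_lincomb:
  assumes "(x, a) \<in> graph_extension M v c" "(y, b) \<in> graph_extension M v c"
  shows "(smul (of_real s) x + smul (of_real t) y, s * a + t * b) \<in> graph_extension M v c"
proof -
  obtain x1 a1 t1 x2 a2 t2 where 1: "x = x1 + smul (of_real t1) v" "a = a1 + t1 * c" "(x1, a1) \<in> M"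
    and 2: "y = x2 + smul (of_real t2) v" "b = a2 + t2 * c" "(x2, a2) \<in> M"
    using assms unfolding graph_extension_def by blast
  have "smul (of_real s) x + smul (of_real t) y =
      (smul (of_real s) x1 + smul (of_real t) x2) + smul (of_real (s * t1 + t * t2)) v"
    unfolding 1 2 by (simp add: scale_right_distrib scale_left_distrib algebra_simps)
  moreover have "s * a + t * b = (s * a1 + t * a2) + (s * t1 + t * t2) * c"
    unfolding 1 2 by (simp add: algebra_simps)
  ultimately show ?thesis
    using dominated_graph_lincomb[OF 1(3) 2(3), of s t] unfolding graph_extension_def by blast
qed

lemma graph_extension_unique:
  assumes v: "\<nexists>c. (v, c) \<in> M" and "(x, a) \<in> graph_extension M v c" "(x, b) \<in> graph_extension M v c"
  shows "a = b"
proof -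
  obtain x1 a1 t1 x2 a2 t2 where 1: "x = x1 + smul (of_real t1) v" "a = a1 + t1 * c" "(x1, a1) \<in> M"
    and 2: "x = x2 + smul (of_real t2) v" "b = a2 + t2 * c" "(x2, a2) \<in> M"
    using assms(2,3) unfolding graph_extension_def by blast
  show "a = b"
  proof (cases "t1 = t2")
    case True
    then show ?thesis using dominated_graph_unique[of x1 a1 a2] 1 2 by simp
  next
    case False
    \<comment> \<open>otherwise \<open>v\<close> would already lie in the domain of \<open>M\<close>\<close>
    have diff: "smul (of_real (t2 - t1)) v = x1 - x2"
      using 1(1) 2(1) by (simp add: scale_left_diff_distrib algebra_simps)
    have "v = smul (of_real (1 / (t2 - t1))) (smul (of_real (t2 - t1)) v)"
      using False by simp
    also have "\<dots> = smul (of_real (1 / (t2 - t1))) x1 + smul (of_real (- 1 / (t2 - t1))) x2"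
      unfolding diff by (simp add: scale_right_diff_distrib)
    finally have veq: "v = smul (of_real (1 / (t2 - t1))) x1 + smul (of_real (- 1 / (t2 - t1))) x2" .
    have "(smul (of_real (1 / (t2 - t1))) x1 + smul (of_real (- 1 / (t2 - t1))) x2,
        (1 / (t2 - t1)) * a1 + (- 1 / (t2 - t1)) * a2) \<in> M"
      by (rule dominated_graph_lincomb[OF 1(3) 2(3)])
    then show ?thesis using v unfolding veq[symmetric] by blast
  qed
qed

lemma dominated_graph_extend:
  assumes M0: "(0, 0) \<in> M" and v: "\<nexists>c. (v, c) \<in> M"
  shows "\<exists>M'. dominated_graph p M' \<and> M \<subseteq> M' \<and> (\<exists>c. (v, c) \<in> M')"
proof -
  obtain c where c_ge: "\<And>x a. (x, a) \<in> M \<Longrightarrow> a - p (x - v) \<le> c"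
    and c_le: "\<And>y b. (y, b) \<in> M \<Longrightarrow> c \<le> p (y + v) - b"
    using dominated_graph_extension_value[OF M0] by blast
  have "dominated_graph p (graph_extension M v c)"
    unfolding dominated_graph_def
  proof (intro conjI allI impI)
    fix x a y b s t assume "(x, a) \<in> graph_extension M v c" "(y, b) \<in> graph_extension M v c"
    then show "(smul (of_real s) x + smul (of_real t) y, s * a + t * b) \<in> graph_extension M v c"
      by (rule graph_extension_lincomb)
  next
    fix x a b assume "(x, a) \<in> graph_extension M v c" "(x, b) \<in> graph_extension M v c"
    then show "a = b" by (rule graph_extension_unique[OF v])
  next
    fix x a assume "(x, a) \<in> graph_extension M v c"
    then obtain x1 a1 t where "x = x1 + smul (of_real t) v" "a = a1 + t * c" "(x1, a1) \<in> M"
      unfolding graph_extension_def by blast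
    then show "a \<le> p x" using dominated_graph_extension_le[OF c_ge c_le] by simp
  qed
  moreover have "(x, a) \<in> graph_extension M v c" if "(x, a) \<in> M" for x a
    unfolding graph_extension_def using that by (intro CollectI exI[of _ x] exI[of _ a] exI[of _ 0]) simp
  moreover have "(v, c) \<in> graph_extension M v c"
    unfolding graph_extension_def using M0 by (intro CollectI exI[of _ 0] exI[of _ 0] exI[of _ 1]) simp
  ultimately show ?thesis by auto
qed

end

lemma dominated_graph_line:
  assumes p: "p \<in> P"
  shows "dominated_graph p {(smul (of_real t) x0, t * p x0) | t. True}" (is "dominated_graph p ?G")
  unfolding dominated_graph_def
proof (intro conjI allI impI)
  fix x a y b s t assume "(x, a) \<in> ?G" "(y, b) \<in> ?G"
  then obtain t1 t2 where "x = smul (of_real t1) x0" "a = t1 * p x0" "y = smul (of_real t2) x0" "b = t2 * p x0"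
    by blast
  then have "smul (of_real s) x + smul (of_real t) y = smul (of_real (s * t1 + t * t2)) x0"
    "s * a + t * b = (s * t1 + t * t2) * p x0"
    by (simp_all add: scale_left_distrib algebra_simps)
  then show "(smul (of_real s) x + smul (of_real t) y, s * a + t * b) \<in> ?G" by blast
next
  fix x a b assume "(x, a) \<in> ?G" "(x, b) \<in> ?G"
  then obtain t1 t2 where "x = smul (of_real t1) x0" "a = t1 * p x0" "x = smul (of_real t2) x0" "b = t2 * p x0"
    by blast
  then show "a = b" by (cases "x0 = 0") (auto simp: p)
next
  fix x a assume "(x, a) \<in> ?G"
  then obtain t where "x = smul (of_real t) x0" "a = t * p x0" by blast
  then show "a \<le> p x"
    using p_nonneg[OF p, of x0] by (simp add: p_smul[OF p] mult_right_mono)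
qed

lemma maximal_dominated_graph:
  assumes G0: "dominated_graph p G0"
  obtains M where "dominated_graph p M" "G0 \<subseteq> M" "\<And>X. dominated_graph p X \<Longrightarrow> M \<subseteq> X \<Longrightarrow> X = M"
proof -
  define A where "A = {G. dominated_graph p G \<and> G0 \<subseteq> G}"
  have "\<exists>M\<in>A. \<forall>X\<in>A. M \<subseteq> X \<longrightarrow> X = M"
  proof (rule Zorn_Lemma2, intro ballI)
    fix C assume C: "C \<in> chains A"
    show "\<exists>U\<in>A. \<forall>X\<in>C. X \<subseteq> U"
    proof (cases "C = {}")
      case True
      then show ?thesis using G0 unfolding A_def by blast
    next
      case False
      have "dominated_graph p (\<Union>C)"
        using C False by (intro dominated_graph_Union) (auto simp: chains_def A_def)
      moreover have "G0 \<subseteq> \<Union>C" using C False unfolding chains_def A_def by blast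
      ultimately show ?thesis unfolding A_def by blast
    qed
  qed
  then obtain M where "M \<in> A" and max: "\<forall>X\<in>A. M \<subseteq> X \<longrightarrow> X = M" by blast
  then have "dominated_graph p M" "G0 \<subseteq> M" unfolding A_def by auto
  moreover have "X = M" if "dominated_graph p X" "M \<subseteq> X" for X
    using max that \<open>G0 \<subseteq> M\<close> unfolding A_def by blast
  ultimately show ?thesis using that by blast
qed

text \<open>By maximality the graph is total, so it is the graph of a real-linear functional.\<close>

lemma real_hahn_banach:
  assumes p: "p \<in> P"
  obtains \<psi> where "\<And>s t x y. \<psi> (smul (of_real s) x + smul (of_real t) y) = s * \<psi> x + t * \<psi> y"
    and "\<And>y. \<psi> y \<le> p y" and "\<psi> x0 = p x0"
proof -
  define G0 where "G0 = {(smul (of_real t) x0, t * p x0) | t. True}"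
  obtain M where M: "dominated_graph p M" "G0 \<subseteq> M"
    and maximal: "\<And>X. dominated_graph p X \<Longrightarrow> M \<subseteq> X \<Longrightarrow> X = M"
    using maximal_dominated_graph[OF dominated_graph_line[OF p, of x0, folded G0_def]] by blast
  have G0: "(smul (of_real t) x0, t * p x0) \<in> M" for t using M(2) unfolding G0_def by blast
  have M0: "(0, 0) \<in> M" using G0[of 0] by simp
  have total: "\<exists>c. (v, c) \<in> M" for v
  proof (rule ccontr)
    assume "\<nexists>c. (v, c) \<in> M"
    then obtain M' where "dominated_graph p M'" "M \<subseteq> M'" "\<exists>c. (v, c) \<in> M'"
      using dominated_graph_extend[OF p M(1) M0] by blast
    then show False using maximal \<open>\<nexists>c. (v, c) \<in> M\<close> by blast
  qed
  define \<psi> where "\<psi> x = (THE a. (x, a) \<in> M)" for x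
  have graph: "(x, \<psi> x) \<in> M" for x
  proof -
    obtain c where "(x, c) \<in> M" using total by blast
    then show ?thesis
      unfolding \<psi>_def by (rule theI) (rule dominated_graph_unique[OF p M(1) _ \<open>(x, c) \<in> M\<close>])
  qed
  have \<psi>: "(x, a) \<in> M \<Longrightarrow> \<psi> x = a" for x a
    using dominated_graph_unique[OF p M(1) graph] by blast
  show ?thesis
  proof
    show "\<psi> (smul (of_real s) x + smul (of_real t) y) = s * \<psi> x + t * \<psi> y" for s t x y
      by (rule \<psi>[OF dominated_graph_lincomb[OF p M(1) graph graph]])
    show "\<psi> y \<le> p y" for y
      by (rule dominated_graph_le[OF p M(1) graph])
    show "\<psi> x0 = p x0" using \<psi>[OF G0[of 1]] by simp
  qed
qed

definition linear_functional :: "('a \<Rightarrow> complex) \<Rightarrow> bool" where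
  "linear_functional \<phi> \<longleftrightarrow> (\<forall>a b x y. \<phi> (smul a x + smul b y) = a * \<phi> x + b * \<phi> y)"

definition dominated_functional :: "('a \<Rightarrow> real) \<Rightarrow> ('a \<Rightarrow> complex) \<Rightarrow> bool" where
  "dominated_functional p \<phi> \<longleftrightarrow> linear_functional \<phi> \<and> (\<forall>y. cmod (\<phi> y) \<le> p y)"

context
  fixes \<phi> assumes \<phi>: "linear_functional \<phi>"
begin

lemma linear_functional_lincomb: "\<phi> (smul a x + smul b y) = a * \<phi> x + b * \<phi> y"
  using \<phi> unfolding linear_functional_def by blast

lemma linear_functional_add: "\<phi> (x + y) = \<phi> x + \<phi> y"
  using linear_functional_lincomb[of 1 x 1 y] by simp

lemma linear_functional_smul: "\<phi> (smul c x) = c * \<phi> x"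
  using linear_functional_lincomb[of c x 0 x] by simp

lemma linear_functional_zero: "\<phi> 0 = 0"
  using linear_functional_smul[of 0 0] by simp

lemma linear_functional_diff: "\<phi> (x - y) = \<phi> x - \<phi> y"
  using linear_functional_lincomb[of 1 x "-1" y] by simp

lemma linear_functional_sum: "\<phi> (sum f A) = (\<Sum>a\<in>A. \<phi> (f a))"
  by (induction A rule: infinite_finite_induct) (simp_all add: linear_functional_zero linear_functional_add)

end

lemma dominated_functional_linear: "dominated_functional p \<phi> \<Longrightarrow> linear_functional \<phi>"
  unfolding dominated_functional_def by blast

lemma dominated_functional_le: "dominated_functional p \<phi> \<Longrightarrow> cmod (\<phi> y) \<le> p y"
  unfolding dominated_functional_def by blast

lemma linear_functional_complexification:
  assumes lin: "\<And>s t x y. \<psi> (smul (of_real s) x + smul (of_real t) y) = s * \<psi> x + t * \<psi> y"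
  shows "linear_functional (\<lambda>x. of_real (\<psi> x) - \<i> * of_real (\<psi> (smul \<i> x)))" (is "linear_functional ?\<phi>")
proof -
  have add: "\<psi> (x + y) = \<psi> x + \<psi> y" for x y using lin[of 1 x 1 y] by simp
  have scale: "\<psi> (smul (of_real s) x) = s * \<psi> x" for s x using lin[of s x 0 x] by simp
  have neg: "\<psi> (- x) = - \<psi> x" for x using scale[of "-1" x] by simp
  have "?\<phi> (smul c x) = c * ?\<phi> x" for c x
  proof -
    define a b where "a = Re c" and "b = Im c"
    have c: "c = complex_of_real a + \<i> * complex_of_real b" unfolding a_def b_def by (simp add: complex_eq)
    have 1: "smul c x = smul (of_real a) x + smul (of_real b) (smul \<i> x)"
      unfolding c by (simp add: scale_left_distrib)
    have 2: "smul \<i> (smul c x) = smul (of_real a) (smul \<i> x) + smul (of_real b) (- x)"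
      unfolding c by (simp add: scale_left_distrib scale_right_distrib mult.commute)
    have "?\<phi> (smul c x) = of_real (a * \<psi> x + b * \<psi> (smul \<i> x)) - \<i> * of_real (a * \<psi> (smul \<i> x) - b * \<psi> x)"
      unfolding 1 2[unfolded 1] add scale neg using 2 add scale neg by (simp add: 1)
    also have "\<dots> = c * ?\<phi> x" unfolding c by (simp add: algebra_simps)
    finally show ?thesis .
  qed
  moreover have "?\<phi> (x + y) = ?\<phi> x + ?\<phi> y" for x y
    by (simp add: scale_right_distrib add algebra_simps)
  ultimately show ?thesis unfolding linear_functional_def by simp
qed

lemma dominated_if_Re_dominated:
  assumes \<phi>: "linear_functional \<phi>" and p: "p \<in> P" and le: "\<And>y. Re (\<phi> y) \<le> p y"
  shows "cmod (\<phi> y) \<le> p y"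
proof (cases "\<phi> y = 0")
  case True
  then show ?thesis using p_nonneg[OF p] by simp
next
  case False
  \<comment> \<open>rotate \<open>y\<close> so that \<open>\<phi>\<close> becomes real and positive on it\<close>
  define u where "u = cnj (\<phi> y) / cmod (\<phi> y)"
  have "cmod u = 1" unfolding u_def using False by (simp add: norm_divide)
  have "of_real (cmod (\<phi> y)) = u * \<phi> y" unfolding u_def using False
    by (simp add: complex_norm_square[symmetric] power2_eq_square field_simps)
  also have "\<dots> = \<phi> (smul u y)" by (rule linear_functional_smul[OF \<phi>, symmetric])
  finally have "cmod (\<phi> y) = Re (\<phi> (smul u y))" by (metis Re_complex_of_real)
  also have "\<dots> \<le> p (smul u y)" by (rule le)
  also have "\<dots> = p y" using \<open>cmod u = 1\<close> by (simp add: p_smul[OF p])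
  finally show ?thesis .
qed

theorem hahn_banach:
  assumes p: "p \<in> P"
  obtains \<phi> where "dominated_functional p \<phi>" "cmod (\<phi> x0) = p x0"
proof -
  obtain \<psi> where lin: "\<And>s t x y. \<psi> (smul (of_real s) x + smul (of_real t) y) = s * \<psi> x + t * \<psi> y"
    and le: "\<And>y. \<psi> y \<le> p y" and x0: "\<psi> x0 = p x0"
    using real_hahn_banach[OF p] by blast
  define \<phi> where "\<phi> x = of_real (\<psi> x) - \<i> * of_real (\<psi> (smul \<i> x))" for x
  have \<phi>: "linear_functional \<phi>"
    unfolding \<phi>_def by (rule linear_functional_complexification[OF lin])
  have re: "Re (\<phi> x) = \<psi> x" for x unfolding \<phi>_def by simp
  then have bound: "cmod (\<phi> y) \<le> p y" for y
    using le by (intro dominated_if_Re_dominated[OF \<phi> p]) simp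
  have "cmod (\<phi> x0) = p x0"
    using bound[of x0] complex_Re_le_cmod[of "\<phi> x0"] re[of x0] x0 by simp
  with \<phi> bound show ?thesis
    using that unfolding dominated_functional_def by blast
qed

lemma eq_if_dominated_functionals_agree:
  assumes "\<And>p \<phi>. p \<in> P \<Longrightarrow> dominated_functional p \<phi> \<Longrightarrow> \<phi> x = \<phi> y"
  shows "x = y"
proof (rule eq_if_seminorms_vanish)
  fix p assume p: "p \<in> P"
  obtain \<phi> where \<phi>: "dominated_functional p \<phi>" and "cmod (\<phi> (x - y)) = p (x - y)"
    using hahn_banach[OF p] by blast
  moreover have "\<phi> (x - y) = 0"
    using assms[OF p \<phi>] linear_functional_diff[OF dominated_functional_linear[OF \<phi>]] by simp
  ultimately show "p (x - y) = 0" by simp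
qed

section \<open>Weak holomorphy\<close>

definition holomorphic_in :: "(complex \<Rightarrow> 'a) \<Rightarrow> complex set \<Rightarrow> bool" where
  "holomorphic_in g D \<longleftrightarrow> (\<forall>z\<in>D. \<exists>d. has_cderiv smul P g z d)"

lemma holomorphic_in_has_cderiv: "holomorphic_in g D \<Longrightarrow> z \<in> D \<Longrightarrow> has_cderiv smul P g z (cderiv smul P g z)"
  unfolding holomorphic_in_def using cderiv_eqI by blast

lemma has_cderiv_functional:
  assumes "p \<in> P" "dominated_functional p \<phi>" "has_cderiv smul P g z d"
  shows "((\<lambda>w. \<phi> (g w)) has_field_derivative \<phi> d) (at z)"
  unfolding DERIV_def
proof (rule tendstoI)
  fix e :: real assume "e > 0"
  have lin: "linear_functional \<phi>" using assms(2) by (rule dominated_functional_linear)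
  have "eventually (\<lambda>h. p (smul (inverse h) (g (z + h) - g z) - d) < e) (at 0)"
    using assms(1,3) \<open>e > 0\<close> unfolding has_cderiv_iff by blast
  then show "eventually (\<lambda>h. dist ((\<phi> (g (z + h)) - \<phi> (g z)) / h) (\<phi> d) < e) (at 0)"
  proof eventually_elim
    case (elim h)
    have "(\<phi> (g (z + h)) - \<phi> (g z)) / h - \<phi> d = \<phi> (smul (inverse h) (g (z + h) - g z) - d)"
      by (simp add: linear_functional_diff[OF lin] linear_functional_smul[OF lin] divide_inverse mult.commute)
    then show ?case
      using dominated_functional_le[OF assms(2), of "smul (inverse h) (g (z + h) - g z) - d"] elim
      by (simp add: dist_norm)
  qed
qed

context
  fixes p \<phi> g D
  assumes p: "p \<in> P" and \<phi>: "dominated_functional p \<phi>" and g: "holomorphic_in g D" and D: "open D"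
begin

lemma has_field_derivative_functional:
  "w \<in> D \<Longrightarrow> ((\<lambda>w. \<phi> (g w)) has_field_derivative \<phi> (cderiv smul P g w)) (at w)"
  by (rule has_cderiv_functional[OF p \<phi> holomorphic_in_has_cderiv[OF g]])

lemma holomorphic_on_functional: "(\<lambda>w. \<phi> (g w)) holomorphic_on D"
  using has_field_derivative_functional D by (simp add: holomorphic_on_open) blast

lemma deriv_functional: "w \<in> D \<Longrightarrow> deriv (\<lambda>w. \<phi> (g w)) w = \<phi> (cderiv smul P g w)"
  by (rule DERIV_imp_deriv[OF has_field_derivative_functional])

end

lemma higher_deriv_functional:
  assumes p: "p \<in> P" and \<phi>: "dominated_functional p \<phi>"
    and g: "\<And>n. holomorphic_in (cderiv_n smul P n g) D" and D: "open D" and w: "w \<in> D"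
  shows "\<phi> (cderiv_n smul P n g w) = (deriv ^^ n) (\<lambda>w. \<phi> (g w)) w"
  using w
proof (induction n arbitrary: w)
  case 0
  then show ?case by simp
next
  case (Suc n)
  have "\<phi> (cderiv_n smul P (Suc n) g w) = deriv (\<lambda>w. \<phi> (cderiv_n smul P n g w)) w"
    using deriv_functional[OF p \<phi> g D Suc.prems] by simp
  also have "\<dots> = deriv ((deriv ^^ n) (\<lambda>w. \<phi> (g w))) w"
  proof (rule complex_derivative_transform_within_open)
    show "(\<lambda>w. \<phi> (cderiv_n smul P n g w)) holomorphic_on D"
      by (rule holomorphic_on_functional[OF p \<phi> g D])
    show "(deriv ^^ n) (\<lambda>w. \<phi> (g w)) holomorphic_on D"
      using holomorphic_higher_deriv[OF holomorphic_on_functional[OF p \<phi> g[of 0] D] D] by simp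
  qed (use Suc D in auto)
  finally show ?case by simp
qed

lemma seminorm_le_SUP:
  assumes g: "holomorphic_in g D" and D: "open D" and K: "compact K" "K \<subseteq> D" and p: "p \<in> P"
    and \<zeta>: "\<zeta> \<in> K"
  shows "p (g \<zeta>) \<le> (SUP \<zeta>\<in>K. p (g \<zeta>))"
proof -
  have "continuous_on K (\<lambda>\<zeta>. p (g \<zeta> - 0))"
  proof (rule continuous_at_imp_continuous_on, rule ballI)
    fix \<zeta> assume "\<zeta> \<in> K"
    then have "\<zeta> \<in> D" using K(2) by blast
    then show "isCont (\<lambda>\<zeta>. p (g \<zeta> - 0)) \<zeta>"
      by (rule has_cderiv_imp_isCont[OF holomorphic_in_has_cderiv[OF g] p])
  qed
  then have "bdd_above ((\<lambda>\<zeta>. p (g \<zeta>)) ` K)"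
    using K(1) by (simp add: bounded_imp_bdd_above compact_imp_bounded compact_continuous_image)
  then show ?thesis using \<zeta> by (rule cSUP_upper2) simp
qed

end

section \<open>Estimates for scalar holomorphic functions\<close>

lemma Cauchy_inequality_cball:
  assumes "f holomorphic_on D" "open D" "cball w r \<subseteq> D" "r > 0"
    and "\<And>\<zeta>. \<zeta> \<in> cball w r \<Longrightarrow> cmod (f \<zeta>) \<le> M"
  shows "cmod ((deriv ^^ n) f w) \<le> fact n * M / r ^ n"
proof (rule Cauchy_inequality)
  show "f holomorphic_on ball w r"
    by (rule holomorphic_on_subset[OF assms(1) subset_trans[OF ball_subset_cball assms(3)]])
  show "continuous_on (cball w r) f"
    by (rule holomorphic_on_imp_continuous_on[OF holomorphic_on_subset[OF assms(1,3)]])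
  show "cmod (f x) \<le> M" if "cmod (w - x) = r" for x
    using assms(5) that by (simp add: dist_norm)
qed (rule assms(4))

lemma deriv_bound_cball:
  assumes "f holomorphic_on D" "open D" "cball w r \<subseteq> D" "r > 0"
    and "\<And>\<zeta>. \<zeta> \<in> cball w r \<Longrightarrow> cmod (f \<zeta>) \<le> M"
  shows "cmod (deriv f w) \<le> M / r"
  using Cauchy_inequality_cball[OF assms, of 1] by simp

definition slope :: "(complex \<Rightarrow> complex) \<Rightarrow> complex \<Rightarrow> complex \<Rightarrow> complex" where
  "slope f z w = (if w = z then deriv f z else (f w - f z) / (w - z))"

lemma holomorphic_on_slope: "f holomorphic_on D \<Longrightarrow> open D \<Longrightarrow> z \<in> D \<Longrightarrow> slope f z holomorphic_on D"
  unfolding slope_def by (rule pole_lemma) (auto simp: interior_open)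

text \<open>On the circle of radius \<open>3R/4\<close> the Cauchy inequalities give \<open>|f'| \<le> 4M/R\<close>, so the slope of
  \<open>f'\<close> at \<open>z\<close> is at most \<open>20M/(3R\<^sup>2) \<le> 7M/R\<^sup>2\<close> there and hence inside; another Cauchy inequality on
  discs of radius \<open>R/4\<close> bounds its derivative on the disc of radius \<open>R/2\<close> by \<open>28M/R\<^sup>3\<close>.\<close>

context
  fixes f :: "complex \<Rightarrow> complex" and D z R M
  assumes f: "f holomorphic_on D" and D: "open D" and sub: "cball z R \<subseteq> D" and R: "R > 0"
    and M: "\<And>\<zeta>. \<zeta> \<in> cball z R \<Longrightarrow> cmod (f \<zeta>) \<le> M"
begin

lemma slope_deriv_bound:
  assumes w: "w \<in> cball z (3 * R / 4)"
  shows "cmod (slope (deriv f) z w) \<le> 7 * M / R^2"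
proof -
  have "cmod (f z) \<le> M" using M R by simp
  then have M0: "M \<ge> 0" by (rule order_trans[OF norm_ge_zero])
  have f': "deriv f holomorphic_on D" using f D by (rule holomorphic_deriv)
  have sub34: "cball z (3 * R / 4) \<subseteq> D" using R by (intro subset_trans[OF subset_cball sub]) simp
  have bz: "cmod (deriv f z) \<le> M / R" by (rule deriv_bound_cball[OF f D sub R M])
  have on_frontier: "cmod (slope (deriv f) z \<zeta>) \<le> 7 * M / R^2" if "\<zeta> \<in> frontier (cball z (3 * R / 4))" for \<zeta>
  proof -
    have d: "cmod (\<zeta> - z) = 3 * R / 4" using that R by (simp add: sphere_def dist_norm norm_minus_commute)
    have "cball \<zeta> (R / 4) \<subseteq> cball z R"
      using d R by (intro cball_subset_cball_iff[THEN iffD2]) (simp add: dist_norm norm_minus_commute)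
    then have b\<zeta>: "cmod (deriv f \<zeta>) \<le> M / (R / 4)"
      using R M sub by (intro deriv_bound_cball[OF f D]) auto
    have "\<zeta> \<noteq> z" using d R by auto
    then have "cmod (slope (deriv f) z \<zeta>) = cmod (deriv f \<zeta> - deriv f z) / cmod (\<zeta> - z)"
      by (simp add: slope_def norm_divide)
    also have "\<dots> = cmod (deriv f \<zeta> - deriv f z) / (3 * R / 4)" by (simp only: d)
    also have "\<dots> \<le> (M / (R / 4) + M / R) / (3 * R / 4)"
      using b\<zeta> bz R norm_triangle_ineq4[of "deriv f \<zeta>" "deriv f z"] by (intro divide_right_mono) auto
    also have "\<dots> \<le> 7 * M / R^2" using R M0 by (simp add: field_simps power2_eq_square)
    finally show ?thesis .
  qed
  show ?thesis
  proof (rule maximum_modulus_frontier[where f = "slope (deriv f) z" and S = "cball z (3 * R / 4)"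
        and \<xi> = w and B = "7 * M / R^2"])
    have "z \<in> D" using sub R by auto
    then have hol: "slope (deriv f) z holomorphic_on cball z (3 * R / 4)"
      by (rule holomorphic_on_subset[OF holomorphic_on_slope[OF f' D] sub34])
    show "slope (deriv f) z holomorphic_on interior (cball z (3 * R / 4))"
      by (rule holomorphic_on_subset[OF hol interior_subset])
    show "continuous_on (closure (cball z (3 * R / 4))) (slope (deriv f) z)"
      using holomorphic_on_imp_continuous_on[OF hol] by simp
    show "bounded (cball z (3 * R / 4))" by simp
    show "\<And>\<zeta>. \<zeta> \<in> frontier (cball z (3 * R / 4)) \<Longrightarrow> cmod (slope (deriv f) z \<zeta>) \<le> 7 * M / R^2"
      by (rule on_frontier)
  qed (rule w)
qed

lemma slope_deriv_lipschitz:
  assumes w1: "w1 \<in> cball z (R / 2)" and w2: "w2 \<in> cball z (R / 2)"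
  shows "cmod (slope (deriv f) z w1 - slope (deriv f) z w2) \<le> 28 * M / R^3 * cmod (w1 - w2)"
proof -
  have "z \<in> D" using sub R by auto
  then have hol: "slope (deriv f) z holomorphic_on D"
    by (rule holomorphic_on_slope[OF holomorphic_deriv[OF f D] D])
  show ?thesis
  proof (rule field_differentiable_bound[OF convex_cball _ _ w1 w2])
    fix w assume w: "w \<in> cball z (R / 2)"
    then have "w \<in> D" using sub R by auto
    then have "slope (deriv f) z field_differentiable at w"
      by (rule holomorphic_on_imp_differentiable_at[OF hol D])
    then show "(slope (deriv f) z has_field_derivative deriv (slope (deriv f) z) w) (at w within cball z (R / 2))"
      using DERIV_deriv_iff_field_differentiable[THEN iffD2] by (blast intro: has_field_derivative_at_within)
    have "cball w (R / 4) \<subseteq> cball z (3 * R / 4)"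
      using w by (intro cball_subset_cball_iff[THEN iffD2]) (simp add: dist_commute)
    moreover have "cball z (3 * R / 4) \<subseteq> D" using R by (intro subset_trans[OF subset_cball sub]) simp
    ultimately have "cmod (deriv (slope (deriv f) z) w) \<le> 7 * M / R^2 / (R / 4)"
      using R by (intro deriv_bound_cball[OF hol D] slope_deriv_bound) auto
    also have "\<dots> = 28 * M / R^3" using R by (simp add: field_simps power2_eq_square power3_eq_cube)
    finally show "cmod (deriv (slope (deriv f) z) w) \<le> 28 * M / R^3" .
  qed
qed

end

context
  fixes f :: "complex \<Rightarrow> complex" and D z0 \<rho> M
  assumes f: "f holomorphic_on D" and D: "open D" and sub: "cball z0 \<rho> \<subseteq> D" and \<rho>_pos: "\<rho> > 0"
    and M: "\<And>\<zeta>. \<zeta> \<in> cball z0 \<rho> \<Longrightarrow> cmod (f \<zeta>) \<le> M"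
begin

lemma taylor_term_bound:
  assumes w: "cmod (w - z0) \<le> s"
  shows "cmod ((deriv ^^ n) f z0 / fact n * (w - z0) ^ n) \<le> M * (s / \<rho>) ^ n"
proof -
  have "cmod (f z0) \<le> M" using M \<rho>_pos by simp
  then have M0: "M \<ge> 0" by (rule order_trans[OF norm_ge_zero])
  have "cmod ((deriv ^^ n) f z0) \<le> fact n * M / \<rho> ^ n"
    by (rule Cauchy_inequality_cball[OF f D sub \<rho>_pos M])
  then have "cmod ((deriv ^^ n) f z0 / fact n) \<le> M / \<rho> ^ n"
    by (simp add: norm_divide field_simps)
  moreover have "cmod ((w - z0) ^ n) \<le> s ^ n" using w by (simp add: norm_power power_mono)
  ultimately have "cmod ((deriv ^^ n) f z0 / fact n * (w - z0) ^ n) \<le> M / \<rho> ^ n * s ^ n"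
    unfolding norm_mult using M0 \<rho>_pos by (intro mult_mono) auto
  also have "\<dots> = M * (s / \<rho>) ^ n" by (simp add: power_divide)
  finally show ?thesis .
qed

lemma taylor_poly_bound:
  assumes w: "cmod (w - z0) \<le> \<rho>"
  shows "cmod (\<Sum>n\<le>k. (deriv ^^ n) f z0 / fact n * (w - z0) ^ n) \<le> real (Suc k) * M"
proof -
  have "cmod (\<Sum>n\<le>k. (deriv ^^ n) f z0 / fact n * (w - z0) ^ n) \<le> (\<Sum>n\<le>k. M * (\<rho> / \<rho>) ^ n)"
    by (rule order_trans[OF norm_sum sum_mono[OF taylor_term_bound[OF w]]])
  then show ?thesis using \<rho>_pos by simp
qed

lemma taylor_remainder_bound:
  assumes s: "s < \<rho>" and w: "cmod (w - z0) \<le> s"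
  shows "cmod (f w - (\<Sum>n\<le>k. (deriv ^^ n) f z0 / fact n * (w - z0) ^ n)) \<le> M * (s / \<rho>) ^ Suc k / (1 - s / \<rho>)"
proof -
  define q where "q = s / \<rho>"
  have "0 \<le> s" using w norm_ge_zero order_trans by blast
  then have q: "0 \<le> q" "q < 1" unfolding q_def using s \<rho>_pos by auto
  define a where "a n = (deriv ^^ n) f z0 / fact n * (w - z0) ^ n" for n
  have "a sums f w" unfolding a_def
  proof (rule holomorphic_power_series)
    show "f holomorphic_on ball z0 \<rho>"
      by (rule holomorphic_on_subset[OF f subset_trans[OF ball_subset_cball sub]])
    show "w \<in> ball z0 \<rho>" using w s by (simp add: dist_norm norm_minus_commute)
  qed
  then have "f w - (\<Sum>n\<le>k. a n) = (\<Sum>n. a (n + Suc k))"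
    using suminf_split_initial_segment[OF sums_summable, of a "f w" "Suc k"] sums_unique[of a "f w"]
    by (simp add: lessThan_Suc_atMost diff_eq_eq)
  moreover have "cmod (\<Sum>n. a (n + Suc k)) \<le> (\<Sum>n. M * q ^ Suc k * q ^ n)"
  proof (rule norm_suminf_le)
    show "cmod (a (n + Suc k)) \<le> M * q ^ Suc k * q ^ n" for n
    proof -
      have "cmod (a (n + Suc k)) \<le> M * q ^ (n + Suc k)"
        unfolding a_def q_def by (rule taylor_term_bound[OF w])
      also have "\<dots> = M * q ^ Suc k * q ^ n" by (simp add: power_add mult_ac)
      finally show ?thesis .
    qed
    show "summable (\<lambda>n. M * q ^ Suc k * q ^ n)"
      using q by (intro summable_mult summable_geometric) simp
  qed
  moreover have "(\<Sum>n. M * q ^ Suc k * q ^ n) = M * q ^ Suc k / (1 - q)"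
    using q by (simp add: suminf_mult suminf_geometric summable_geometric divide_inverse)
  ultimately show ?thesis unfolding a_def q_def by simp
qed

end

lemma null_sequence_in_punctured_ball:
  assumes "\<rho> > 0"
  obtains hs :: "nat \<Rightarrow> complex" where "hs \<longlonglongrightarrow> 0" "\<And>n. hs n \<noteq> 0" "\<And>n. cmod (hs n) \<le> \<rho>"
proof
  define hs where "hs n = complex_of_real (\<rho> / (real n + 1))" for n
  have norm_hs: "cmod (hs n) = \<rho> / (real n + 1)" for n
    unfolding hs_def norm_of_real using assms by simp
  have "0 < cmod (hs n)" "cmod (hs n) \<le> \<rho>" for n unfolding norm_hs using assms by (auto simp: field_simps)
  then show "hs n \<noteq> 0" "cmod (hs n) \<le> \<rho>" for n by auto
  have "(\<lambda>n. \<rho> / (real n + 1)) \<longlonglongrightarrow> 0"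
    using tendsto_mult_left_zero[OF LIMSEQ_inverse_real_of_nat, of \<rho>]
    by (simp add: divide_inverse add.commute mult.commute)
  from tendsto_of_real[OF this, where 'a = complex] show "hs \<longlonglongrightarrow> 0"
    by (simp only: hs_def[abs_def] of_real_0)
qed

section \<open>Local completeness and the derivative\<close>

context lchs
begin

lemma gauge_le: "t > 0 \<Longrightarrow> x \<in> smul (of_real t) ` B \<Longrightarrow> gauge smul B x \<le> t"
  unfolding gauge_def by (rule cInf_lower) (auto intro!: bdd_belowI[of _ 0])

lemma in_scaled_imageI: "t \<noteq> 0 \<Longrightarrow> smul (of_real (1 / t)) v \<in> B \<Longrightarrow> v \<in> smul (of_real t) ` B"
  by (rule image_eqI[of _ _ "smul (of_real (1 / t)) v"]) simp_all

lemma seminorm_le_in_scaled: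
  assumes p: "p \<in> P" and K: "\<And>b. b \<in> B \<Longrightarrow> p b \<le> K" and t: "t \<ge> 0" "x \<in> smul (of_real t) ` B"
  shows "p x \<le> t * K"
  using t K by (auto simp: p_smul[OF p] mult_left_mono)

lemma seminorm_le_gauge:
  assumes p: "p \<in> P" and K: "\<And>b. b \<in> B \<Longrightarrow> p b \<le> K" "K > 0"
    and t0: "t0 > 0" "x \<in> smul (of_real t0) ` B"
  shows "p x \<le> K * gauge smul B x"
proof -
  have "p x / K \<le> gauge smul B x"
    unfolding gauge_def
  proof (rule cInf_greatest)
    show "{t. t > 0 \<and> x \<in> smul (of_real t) ` B} \<noteq> {}" using t0 by blast
    fix t assume "t \<in> {t. t > 0 \<and> x \<in> smul (of_real t) ` B}"
    then have "p x \<le> t * K" using seminorm_le_in_scaled[OF p K(1)] by auto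
    then show "p x / K \<le> t" using K(2) by (simp add: field_simps)
  qed
  then show ?thesis using K(2) by (simp add: field_simps)
qed

lemma lc_bounded_seminorm_bound:
  assumes "lc_bounded P B" "B \<noteq> {}" "p \<in> P"
  obtains K where "K > 0" "\<And>b. b \<in> B \<Longrightarrow> p b \<le> K"
proof -
  obtain K where K: "\<And>b. b \<in> B \<Longrightarrow> p b \<le> K"
    using assms(1,3) unfolding lc_bounded_def bdd_above_def by blast
  obtain b0 where "b0 \<in> B" using assms(2) by blast
  then have "K \<ge> 0" using K[of b0] p_nonneg[OF assms(3), of b0] by linarith
  show ?thesis
  proof (rule that)
    show "K + 1 > 0" using \<open>K \<ge> 0\<close> by simp
    show "p b \<le> K + 1" if "b \<in> B" for b using K[OF that] by simp
  qed
qed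

text \<open>A gauge-Cauchy sequence in \<open>B\<close> converges in \<open>E\<close>: its limit in the Banach space \<open>E\<^sub>B\<close> is
  some \<open>y = m b\<close>, \<open>b \<in> B\<close>, and by absolute convexity the differences \<open>x\<^sub>n - y\<close> lie in \<open>(m + 1) B\<close>, on
  which each seminorm is dominated by a multiple of the gauge.\<close>

lemma banach_gauge_convergent:
  assumes B: "banach_gauge smul B" "abs_convex smul B" "lc_bounded P B"
    and xs: "\<And>n. xs n \<in> B"
    and cauchy: "\<And>e. e > 0 \<Longrightarrow> \<exists>N. \<forall>m\<ge>N. \<forall>n\<ge>N. gauge smul B (xs m - xs n) < e"
  obtains y where "\<And>p. p \<in> P \<Longrightarrow> (\<lambda>n. p (xs n - y)) \<longlonglongrightarrow> 0"
proof -
  have "xs n \<in> span_set smul B" for n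
    unfolding span_set_def using xs[of n] by (intro CollectI exI[of _ 1] bexI[of _ "xs n"]) auto
  then obtain y where "y \<in> span_set smul B" and gauge_lim: "(\<lambda>n. gauge smul B (xs n - y)) \<longlonglongrightarrow> 0"
    using B(1) cauchy unfolding banach_gauge_def by blast
  then obtain m b where b: "b \<in> B" and y: "y = smul (of_nat m) b" unfolding span_set_def by blast
  have convex: "\<And>x y a b. x \<in> B \<Longrightarrow> y \<in> B \<Longrightarrow> cmod a + cmod b \<le> 1 \<Longrightarrow> smul a x + smul b y \<in> B"
    using B(2) unfolding abs_convex_def by blast
  have scaled: "xs n - y \<in> smul (of_real (real m + 1)) ` B" for n
  proof (rule in_scaled_imageI)
    define c where "c = (of_real (1 / (real m + 1)) :: complex)"
    have "cmod c + cmod (- (c * of_nat m)) = (1 + real m) / (real m + 1)"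
      unfolding c_def norm_minus_cancel norm_mult norm_of_real norm_of_nat by (simp add: add_divide_distrib)
    then have "cmod c + cmod (- (c * of_nat m)) \<le> 1" by simp
    then have "smul c (xs n) + smul (- (c * of_nat m)) b \<in> B" by (rule convex[OF xs b])
    then show "smul (of_real (1 / (real m + 1))) (xs n - y) \<in> B"
      unfolding y c_def by (simp only: diff_conv_add_uminus scale_right_distrib scale_minus_right scale_scale scale_minus_left)
  qed simp
  show ?thesis
  proof (rule that)
    fix p assume p: "p \<in> P"
    obtain K where K: "K > 0" "\<And>b. b \<in> B \<Longrightarrow> p b \<le> K"
      using lc_bounded_seminorm_bound[OF B(3) _ p] xs by blast
    show "(\<lambda>n. p (xs n - y)) \<longlonglongrightarrow> 0"
    proof (rule tendsto_sandwich[of "\<lambda>n. 0" _ _ "\<lambda>n. K * gauge smul B (xs n - y)"])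
      show "\<forall>\<^sub>F n in sequentially. p (xs n - y) \<le> K * gauge smul B (xs n - y)"
        using seminorm_le_gauge[OF p K(2,1) _ scaled] by simp
      show "(\<lambda>n. K * gauge smul B (xs n - y)) \<longlonglongrightarrow> 0"
        using tendsto_mult_right_zero[OF gauge_lim] by simp
    qed (simp_all add: p_nonneg[OF p])
  qed
qed

context
  fixes B q \<rho>
  assumes lipschitz: "\<And>h k t. h \<noteq> 0 \<Longrightarrow> cmod h \<le> \<rho> \<Longrightarrow> k \<noteq> 0 \<Longrightarrow> cmod k \<le> \<rho> \<Longrightarrow> t > 0 \<Longrightarrow>
      cmod (h - k) \<le> t \<Longrightarrow> q h - q k \<in> smul (of_real t) ` B"
begin

lemma gauge_cauchy_if_lipschitz:
  assumes hs: "hs \<longlonglongrightarrow> 0" "\<And>n. hs n \<noteq> 0" "\<And>n. cmod (hs n) \<le> \<rho>" and e: "e > 0"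
  shows "\<exists>N. \<forall>m\<ge>N. \<forall>n\<ge>N. gauge smul B (q (hs m) - q (hs n)) < e"
proof -
  obtain N where N: "\<And>m n. m \<ge> N \<Longrightarrow> n \<ge> N \<Longrightarrow> dist (hs m) (hs n) < e / 2"
    using metric_CauchyD[OF LIMSEQ_imp_Cauchy[OF hs(1)], of "e / 2"] e by auto
  have "gauge smul B (q (hs m) - q (hs n)) \<le> e / 2" if "m \<ge> N" "n \<ge> N" for m n
  proof (rule gauge_le)
    show "q (hs m) - q (hs n) \<in> smul (of_real (e / 2)) ` B"
      using N[OF that] e by (intro lipschitz hs(2,3)) (auto simp: dist_norm)
  qed (use e in simp)
  then have "gauge smul B (q (hs m) - q (hs n)) < e" if "m \<ge> N" "n \<ge> N" for m n
    using that e by fastforce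
  then show ?thesis by blast
qed

lemma seminorm_le_at_limit_if_lipschitz:
  assumes p: "p \<in> P" and K: "\<And>b. b \<in> B \<Longrightarrow> p b \<le> K"
    and hs: "hs \<longlonglongrightarrow> 0" "\<And>n. hs n \<noteq> 0" "\<And>n. cmod (hs n) \<le> \<rho>"
    and y: "(\<lambda>n. p (q (hs n) - y)) \<longlonglongrightarrow> 0" and h: "h \<noteq> 0" "cmod h \<le> \<rho>"
  shows "p (q h - y) \<le> K * cmod h"
proof (rule LIMSEQ_le_const)
  show "(\<lambda>n. (cmod h + cmod (hs n)) * K + p (q (hs n) - y)) \<longlonglongrightarrow> K * cmod h"
    using tendsto_add[OF tendsto_mult[OF tendsto_add[OF tendsto_const[of "cmod h"] tendsto_norm_zero[OF hs(1)]]
        tendsto_const[of K]] y]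
    by (simp add: mult.commute)
  have "p (q h - y) \<le> (cmod h + cmod (hs n)) * K + p (q (hs n) - y)" for n
  proof -
    have "cmod (h - hs n) \<le> cmod h + cmod (hs n)" by (rule norm_triangle_ineq4)
    then have "q h - q (hs n) \<in> smul (of_real (cmod h + cmod (hs n))) ` B"
      using h hs by (intro lipschitz) (auto simp: add_pos_nonneg)
    then have "p (q h - q (hs n)) \<le> (cmod h + cmod (hs n)) * K"
      using seminorm_le_in_scaled[OF p K] by simp
    then show ?thesis using p_triangle[OF p, of "q h" y "q (hs n)"] by simp
  qed
  then show "\<exists>N. \<forall>n\<ge>N. p (q h - y) \<le> (cmod h + cmod (hs n)) * K + p (q (hs n) - y)" by blast
qed

lemma banach_gauge_lipschitz_limit:
  assumes B: "banach_gauge smul B" "abs_convex smul B" "lc_bounded P B" and \<rho>: "\<rho> > 0"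
    and into: "\<And>h. h \<noteq> 0 \<Longrightarrow> cmod h \<le> \<rho> \<Longrightarrow> q h \<in> B"
  obtains y where "\<And>p. p \<in> P \<Longrightarrow> \<exists>K. \<forall>h. h \<noteq> 0 \<longrightarrow> cmod h \<le> \<rho> \<longrightarrow> p (q h - y) \<le> K * cmod h"
proof -
  obtain hs where hs: "hs \<longlonglongrightarrow> 0" "\<And>n. hs n \<noteq> 0" "\<And>n. cmod (hs n) \<le> \<rho>"
    using null_sequence_in_punctured_ball[OF \<rho>] by blast
  obtain y where y: "\<And>p. p \<in> P \<Longrightarrow> (\<lambda>n. p (q (hs n) - y)) \<longlonglongrightarrow> 0"
  proof (rule banach_gauge_convergent[OF B])
    show "q (hs n) \<in> B" for n by (rule into[OF hs(2,3)])
    show "\<exists>N. \<forall>m\<ge>N. \<forall>n\<ge>N. gauge smul B (q (hs m) - q (hs n)) < e" if "e > 0" for e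
      by (rule gauge_cauchy_if_lipschitz[OF hs that])
  qed (rule that)
  show ?thesis
  proof (rule that)
    fix p assume p: "p \<in> P"
    obtain K where "K > 0" "\<And>b. b \<in> B \<Longrightarrow> p b \<le> K"
      using lc_bounded_seminorm_bound[OF B(3) _ p] into[OF hs(2,3)] by blast
    then show "\<exists>K. \<forall>h. h \<noteq> 0 \<longrightarrow> cmod h \<le> \<rho> \<longrightarrow> p (q h - y) \<le> K * cmod h"
      using seminorm_le_at_limit_if_lipschitz[OF p _ hs y[OF p]] by blast
  qed
qed

end

text \<open>By Hahn--Banach, \<open>polar_ball r = {x. \<forall>p\<in>P. p x \<le> r p}\<close>; the description through dominated
  functionals is the form in which the scalar Cauchy estimates establish membership.\<close>

definition polar_ball :: "(('a \<Rightarrow> real) \<Rightarrow> real) \<Rightarrow> 'a set" where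
  "polar_ball r = {x. \<forall>p\<in>P. \<forall>\<phi>. dominated_functional p \<phi> \<longrightarrow> cmod (\<phi> x) \<le> r p}"

lemma seminorm_le_polar_ball:
  assumes "p \<in> P" "x \<in> polar_ball r"
  shows "p x \<le> r p"
proof -
  obtain \<phi> where "dominated_functional p \<phi>" "cmod (\<phi> x) = p x" using hahn_banach[OF assms(1)] .
  then show ?thesis using assms unfolding polar_ball_def by force
qed

lemma closedin_polar_ball: "closedin (sn_topology P) (polar_ball r)"
  unfolding closedin_def sn_topology_def topspace_pm_topology openin_pm_topology
proof (intro conjI ballI subset_UNIV)
  fix x assume "x \<in> UNIV - polar_ball r"
  then obtain p \<phi> where p: "p \<in> P" and \<phi>: "dominated_functional p \<phi>" and gt: "cmod (\<phi> x) > r p"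
    unfolding polar_ball_def by (auto simp: not_le)
  have "{y \<in> UNIV. \<forall>d\<in>{\<lambda>x y. p (x - y)}. d x y < cmod (\<phi> x) - r p} \<subseteq> UNIV - polar_ball r"
  proof
    fix y assume "y \<in> {y \<in> UNIV. \<forall>d\<in>{\<lambda>x y. p (x - y)}. d x y < cmod (\<phi> x) - r p}"
    then have "p (x - y) < cmod (\<phi> x) - r p" by simp
    moreover have "cmod (\<phi> x) \<le> cmod (\<phi> y) + p (x - y)"
      using norm_triangle_ineq2[of "\<phi> x" "\<phi> y"] dominated_functional_le[OF \<phi>, of "x - y"]
        linear_functional_diff[OF dominated_functional_linear[OF \<phi>]] by simp
    ultimately have "\<not> cmod (\<phi> y) \<le> r p" by linarith
    then show "y \<in> UNIV - polar_ball r" using p \<phi> unfolding polar_ball_def by blast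
  qed
  then show "\<exists>F e. finite F \<and> F \<subseteq> (\<lambda>p x y. p (x - y)) ` P \<and> e > 0 \<and>
      {y \<in> UNIV. \<forall>d\<in>F. d x y < e} \<subseteq> UNIV - polar_ball r"
    using p gt by (intro exI[of _ "{\<lambda>x y. p (x - y)}"] exI[of _ "cmod (\<phi> x) - r p"]) auto
qed

lemma lc_bounded_polar_ball: "lc_bounded P (polar_ball r)"
  unfolding lc_bounded_def bdd_above_def using seminorm_le_polar_ball by blast

lemma abs_convex_polar_ball:
  assumes "\<And>p. p \<in> P \<Longrightarrow> r p \<ge> 0"
  shows "abs_convex smul (polar_ball r)"
  unfolding abs_convex_def
proof (intro ballI allI impI)
  fix x y a b assume x: "x \<in> polar_ball r" and y: "y \<in> polar_ball r" and ab: "cmod a + cmod b \<le> 1"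
  show "smul a x + smul b y \<in> polar_ball r"
    unfolding polar_ball_def
  proof (intro CollectI ballI allI impI)
    fix p \<phi> assume p: "p \<in> P" and \<phi>: "dominated_functional p \<phi>"
    have "cmod (\<phi> (smul a x + smul b y)) \<le> cmod a * cmod (\<phi> x) + cmod b * cmod (\<phi> y)"
      using norm_triangle_ineq[of "a * \<phi> x" "b * \<phi> y"]
      by (simp add: linear_functional_lincomb[OF dominated_functional_linear[OF \<phi>]] norm_mult)
    also have "\<dots> \<le> cmod a * r p + cmod b * r p"
      using x y p \<phi> unfolding polar_ball_def by (intro add_mono mult_left_mono) auto
    also have "\<dots> \<le> r p" using mult_right_mono[OF ab assms[OF p]] by (simp add: distrib_right)
    finally show "cmod (\<phi> (smul a x + smul b y)) \<le> r p" .
  qed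
qed

lemma in_scaled_polar_ball:
  assumes "t > 0" "\<And>p \<phi>. p \<in> P \<Longrightarrow> dominated_functional p \<phi> \<Longrightarrow> cmod (\<phi> x) \<le> t * r p"
  shows "x \<in> smul (of_real t) ` polar_ball r"
proof (rule in_scaled_imageI)
  show "smul (of_real (1 / t)) x \<in> polar_ball r"
    unfolding polar_ball_def
  proof (intro CollectI ballI allI impI)
    fix p \<phi> assume "p \<in> P" and \<phi>: "dominated_functional p \<phi>"
    then have "cmod (\<phi> x) \<le> t * r p" by (rule assms(2))
    then show "cmod (\<phi> (smul (of_real (1 / t)) x)) \<le> r p"
      using assms(1) by (simp add: linear_functional_smul[OF dominated_functional_linear[OF \<phi>]]
          norm_divide pos_divide_le_eq mult.commute)
  qed
qed (use assms in simp)

lemma functional_cderiv_quotient: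
  assumes p: "p \<in> P" and \<phi>: "dominated_functional p \<phi>" and g: "holomorphic_in g D" and D: "open D"
    and z: "z \<in> D" "z + h \<in> D" and h: "h \<noteq> 0"
  shows "\<phi> (smul (inverse h) (cderiv smul P g (z + h) - cderiv smul P g z)) =
    slope (deriv (\<lambda>w. \<phi> (g w))) z (z + h)"
  using h unfolding slope_def
  by (simp add: linear_functional_smul[OF dominated_functional_linear[OF \<phi>]]
      linear_functional_diff[OF dominated_functional_linear[OF \<phi>]] deriv_functional[OF p \<phi> g D] z
      divide_inverse mult.commute)

lemma cderiv_quotient_functional_bounds:
  assumes p: "p \<in> P" and \<phi>: "dominated_functional p \<phi>" and g: "holomorphic_in g D" and D: "open D"
    and sub: "cball z R \<subseteq> D" and R: "R > 0" and M: "\<And>\<zeta>. \<zeta> \<in> cball z R \<Longrightarrow> p (g \<zeta>) \<le> M"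
    and h: "h \<noteq> 0" "cmod h \<le> R / 2" and k: "k \<noteq> 0" "cmod k \<le> R / 2"
  defines "q \<equiv> \<lambda>h. smul (inverse h) (cderiv smul P g (z + h) - cderiv smul P g z)"
  shows "cmod (\<phi> (q h)) \<le> 7 * M / R^2"
    and "cmod (\<phi> (q h) - \<phi> (q k)) \<le> 28 * M / R^3 * cmod (h - k)"
proof -
  let ?f = "\<lambda>w. \<phi> (g w)"
  have f: "?f holomorphic_on D" by (rule holomorphic_on_functional[OF p \<phi> g D])
  have fM: "cmod (?f \<zeta>) \<le> M" if "\<zeta> \<in> cball z R" for \<zeta>
    using dominated_functional_le[OF \<phi>, of "g \<zeta>"] M[OF that] by simp
  have in_half: "z + h \<in> cball z (R / 2)" if "cmod h \<le> R / 2" for h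
    using that by (simp add: dist_norm)
  have q: "\<phi> (q h) = slope (deriv ?f) z (z + h)" if "h \<noteq> 0" "cmod h \<le> R / 2" for h
    unfolding q_def using sub R in_half[OF that(2)] that(1)
    by (intro functional_cderiv_quotient[OF p \<phi> g D]) auto
  show "cmod (\<phi> (q h)) \<le> 7 * M / R^2"
    unfolding q[OF h] using in_half[OF h(2)] R by (intro slope_deriv_bound[OF f D sub R fM]) auto
  show "cmod (\<phi> (q h) - \<phi> (q k)) \<le> 28 * M / R^3 * cmod (h - k)"
    using slope_deriv_lipschitz[OF f D sub R fM in_half[OF h(2)] in_half[OF k(2)]]
    unfolding q[OF h] q[OF k] by simp
qed

lemma cderiv_quotients_in_polar_ball:
  assumes g: "holomorphic_in g D" and D: "open D" and sub: "cball z R \<subseteq> D" and R: "R > 0"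
    and M: "\<And>p \<zeta>. p \<in> P \<Longrightarrow> \<zeta> \<in> cball z R \<Longrightarrow> p (g \<zeta>) \<le> M p" and M0: "\<And>p. p \<in> P \<Longrightarrow> M p \<ge> 0"
  defines "q \<equiv> \<lambda>h. smul (inverse h) (cderiv smul P g (z + h) - cderiv smul P g z)"
    and "B \<equiv> polar_ball (\<lambda>p. (28 / R^3 + 7 / R^2) * M p)"
  shows "h \<noteq> 0 \<Longrightarrow> cmod h \<le> R / 2 \<Longrightarrow> q h \<in> B"
    and "h \<noteq> 0 \<Longrightarrow> cmod h \<le> R / 2 \<Longrightarrow> k \<noteq> 0 \<Longrightarrow> cmod k \<le> R / 2 \<Longrightarrow> t > 0 \<Longrightarrow>
      cmod (h - k) \<le> t \<Longrightarrow> q h - q k \<in> smul (of_real t) ` B"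
proof -
  define C where "C = 28 / R^3 + 7 / R^2"
  have C: "7 / R^2 \<le> C" "28 / R^3 \<le> C" using R by (simp_all add: C_def)
  show "q h \<in> B" if h: "h \<noteq> 0" "cmod h \<le> R / 2"
    unfolding B_def polar_ball_def C_def[symmetric]
  proof (intro CollectI ballI allI impI)
    fix p \<phi> assume p: "p \<in> P" and \<phi>: "dominated_functional p \<phi>"
    have "cmod (\<phi> (q h)) \<le> 7 / R^2 * M p"
      using cderiv_quotient_functional_bounds(1)[OF p \<phi> g D sub R M[OF p] h h] by (simp add: q_def)
    also have "\<dots> \<le> C * M p" by (rule mult_right_mono[OF C(1) M0[OF p]])
    finally show "cmod (\<phi> (q h)) \<le> C * M p" .
  qed
  show "q h - q k \<in> smul (of_real t) ` B"
    if hk: "h \<noteq> 0" "cmod h \<le> R / 2" "k \<noteq> 0" "cmod k \<le> R / 2" and t: "t > 0" "cmod (h - k) \<le> t"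
    unfolding B_def C_def[symmetric]
  proof (rule in_scaled_polar_ball[OF t(1)])
    fix p \<phi> assume p: "p \<in> P" and \<phi>: "dominated_functional p \<phi>"
    have "cmod (\<phi> (q h - q k)) \<le> 28 * M p / R^3 * cmod (h - k)"
      using cderiv_quotient_functional_bounds(2)[OF p \<phi> g D sub R M[OF p] hk]
      by (simp add: q_def linear_functional_diff[OF dominated_functional_linear[OF \<phi>]])
    also have "\<dots> = (28 / R^3 * M p) * cmod (h - k)" by simp
    also have "\<dots> \<le> (C * M p) * t"
      using M0[OF p] t R by (intro mult_mono mult_right_mono C(2)) (auto simp: C_def)
    finally show "cmod (\<phi> (q h - q k)) \<le> t * (C * M p)" by (simp add: mult.commute)
  qed
qed

end

locale locally_complete_lchs = lchs +
  assumes locally_complete: "locally_complete smul P"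
begin

lemma banach_gauge_polar_ball: "(\<And>p. p \<in> P \<Longrightarrow> r p \<ge> 0) \<Longrightarrow> banach_gauge smul (polar_ball r)"
  using locally_complete closedin_polar_ball lc_bounded_polar_ball abs_convex_polar_ball
  unfolding locally_complete_def by blast

text \<open>Near \<open>z\<close> the difference quotients of \<open>g'\<close> stay in a fixed polar ball \<open>B\<close> and are Lipschitz
  for its gauge, by the Cauchy estimates for the scalar functions \<open>\<phi> \<circ> g\<close>; local completeness makes
  them converge.\<close>

lemma has_cderiv_cderiv:
  assumes D: "open D" and g: "holomorphic_in g D" and z: "z \<in> D"
  shows "\<exists>d. has_cderiv smul P (cderiv smul P g) z d"
proof -
  obtain R where R: "R > 0" "cball z R \<subseteq> D" using open_contains_cball D z by blast
  define N where "N p = (SUP \<zeta>\<in>cball z R. p (g \<zeta>))" for p :: "'a \<Rightarrow> real"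
  have N: "p (g \<zeta>) \<le> N p" if "p \<in> P" "\<zeta> \<in> cball z R" for p \<zeta>
    unfolding N_def by (rule seminorm_le_SUP[OF g D compact_cball R(2) that])
  have N0: "N p \<ge> 0" if "p \<in> P" for p
    using N[OF that, of z] p_nonneg[OF that, of "g z"] R(1) by simp
  define q where "q h = smul (inverse h) (cderiv smul P g (z + h) - cderiv smul P g z)" for h
  define B where "B = polar_ball (\<lambda>p. (28 / R^3 + 7 / R^2) * N p)"
  note quotients = cderiv_quotients_in_polar_ball[OF g D R(2,1) N N0, folded q_def B_def]
  obtain y where y: "\<And>p. p \<in> P \<Longrightarrow> \<exists>K. \<forall>h. h \<noteq> 0 \<longrightarrow> cmod h \<le> R / 2 \<longrightarrow> p (q h - y) \<le> K * cmod h"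
  proof (rule banach_gauge_lipschitz_limit[where B = B and q = q and \<rho> = "R / 2"])
    have "28 / R^3 + 7 / R^2 \<ge> 0" using R(1) by simp
    then show "banach_gauge smul B" "abs_convex smul B"
      unfolding B_def using N0 by (simp_all add: banach_gauge_polar_ball abs_convex_polar_ball)
  qed (use R(1) quotients in \<open>auto simp: B_def lc_bounded_polar_ball\<close>)
  have "has_cderiv smul P (cderiv smul P g) z y"
    using y R(1) unfolding q_def by (intro has_cderiv_if_quotient_bound[where \<rho> = "R / 2"]) auto
  then show ?thesis by blast
qed

lemma holomorphic_in_cderiv_n:
  assumes "open D" "holomorphic_in g D"
  shows "holomorphic_in (cderiv_n smul P n g) D"
  by (induction n) (use assms has_cderiv_cderiv in \<open>auto simp: holomorphic_in_def\<close>)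

end

lemma open_disc: "open (disc z0 r)"
  unfolding open_dist
proof (intro ballI)
  fix z assume "z \<in> disc z0 r"
  then obtain s where s: "cmod (z - z0) < s" "ereal s < r"
    unfolding disc_def using ereal_dense2 by force
  show "\<exists>e>0. \<forall>y. dist y z < e \<longrightarrow> y \<in> disc z0 r"
  proof (intro exI[of _ "s - cmod (z - z0)"] conjI allI impI)
    fix y assume "dist y z < s - cmod (z - z0)"
    then have "ereal (cmod (y - z0)) < ereal s"
      using norm_triangle_ineq[of "y - z" "z - z0"] by (simp add: dist_norm)
    then have "ereal (cmod (y - z0)) < r" using s(2) by (rule less_trans)
    then show "y \<in> disc z0 r" unfolding disc_def by simp
  qed (use s in simp)
qed

lemma centre_in_disc: "r > 0 \<Longrightarrow> z0 \<in> disc z0 r"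
  unfolding disc_def by (simp add: zero_ereal_def)

lemma cball_subset_disc: "ereal \<rho> < r \<Longrightarrow> cball z0 \<rho> \<subseteq> disc z0 r"
proof
  fix x assume "ereal \<rho> < r" "x \<in> cball z0 \<rho>"
  then have "ereal (cmod (x - z0)) \<le> ereal \<rho>" by (simp add: dist_norm norm_minus_commute)
  then have "ereal (cmod (x - z0)) < r" using \<open>ereal \<rho> < r\<close> by (rule order_le_less_trans)
  then show "x \<in> disc z0 r" unfolding disc_def by simp
qed

lemma compact_subset_disc:
  assumes "compact K" "K \<subseteq> disc z0 r" "r > 0"
  obtains s \<rho> where "0 \<le> s" "s < \<rho>" "ereal \<rho> < r" "K \<subseteq> cball z0 s"
proof -
  obtain s where s: "0 \<le> s" "ereal s < r" "K \<subseteq> cball z0 s"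
  proof (cases "K = {}")
    case True
    then show ?thesis using assms(3) by (intro that[of 0]) (auto simp: zero_ereal_def)
  next
    case False
    obtain w where w: "w \<in> K" "\<And>z. z \<in> K \<Longrightarrow> dist z0 z \<le> dist z0 w"
      using distance_attains_sup[OF assms(1) False] by blast
    show ?thesis
    proof (rule that[of "dist z0 w"])
      show "ereal (dist z0 w) < r" using w(1) assms(2) unfolding disc_def by (auto simp: dist_norm norm_minus_commute)
    qed (use w in auto)
  qed
  obtain \<rho> where "ereal s < ereal \<rho>" "ereal \<rho> < r" using ereal_dense2[OF s(2)] by blast
  then show ?thesis using that s by simp
qed

lemma higher_deriv_polynomial_centre:
  fixes b :: "nat \<Rightarrow> complex"
  shows "(deriv ^^ m) (\<lambda>w. \<Sum>n\<le>j. b n * (w - z0) ^ n) z0 = (if m \<le> j then fact m * b m else 0)"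
proof -
  have "(deriv ^^ m) (\<lambda>w. \<Sum>n\<in>A. b n * (w - z0) ^ n) z0 =
      (\<Sum>n\<in>A. b n * (deriv ^^ m) (\<lambda>w. (w - z0) ^ n) z0)" if "finite A" for A
    using that
  proof (induction A rule: finite_induct)
    case (insert a A)
    have "(deriv ^^ m) (\<lambda>w. b a * (w - z0) ^ a + (\<Sum>n\<in>A. b n * (w - z0) ^ n)) z0 =
        (deriv ^^ m) (\<lambda>w. b a * (w - z0) ^ a) z0 + (deriv ^^ m) (\<lambda>w. \<Sum>n\<in>A. b n * (w - z0) ^ n) z0"
      by (rule higher_deriv_add[of _ UNIV]) (auto intro!: holomorphic_intros)
    moreover have "(deriv ^^ m) (\<lambda>w. b a * (w - z0) ^ a) z0 = b a * (deriv ^^ m) (\<lambda>w. (w - z0) ^ a) z0"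
      by (rule higher_deriv_cmult[of _ UNIV]) (auto intro!: holomorphic_intros)
    ultimately show ?case using insert by simp
  qed (simp add: higher_deriv_const)
  moreover have "(deriv ^^ m) (\<lambda>w. (w - z0) ^ n) z0 = (if n = m then fact m else 0)" for n
    unfolding higher_deriv_power by (cases n m rule: linorder_cases) (auto simp: pochhammer_fact pochhammer_0_left)
  ultimately have "(deriv ^^ m) (\<lambda>w. \<Sum>n\<le>j. b n * (w - z0) ^ n) z0 = (\<Sum>n\<le>j. b n * (if n = m then fact m else 0))"
    by simp
  also have "\<dots> = (\<Sum>n\<le>j. if n = m then fact m * b m else 0)" by (rule sum.cong) auto
  finally show ?thesis by (simp add: sum.delta)
qed

section \<open>Taylor projections on a disc\<close>

locale taylor_disc = locally_complete_lchs +
  fixes z0 :: complex and r :: ereal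
  assumes r_pos: "r > 0"
begin

abbreviation "\<Omega> \<equiv> disc z0 r"

abbreviation "Q k \<equiv> taylor_proj smul P z0 r k"

definition disc_poly :: "nat \<Rightarrow> (nat \<Rightarrow> 'a) \<Rightarrow> complex \<Rightarrow> 'a" where
  "disc_poly j a = (\<lambda>z. if z \<in> \<Omega> then (\<Sum>n\<le>j. smul ((z - z0) ^ n / of_nat (fact n)) (a n)) else 0)"

lemma taylor_proj_eq_disc_poly: "Q k f = disc_poly k (\<lambda>n. cderiv_n smul P n f z0)"
  unfolding taylor_proj_def disc_poly_def ..

lemma centre_in_\<Omega>: "z0 \<in> \<Omega>"
  by (rule centre_in_disc[OF r_pos])

lemma holo_iff: "f \<in> holo smul P \<Omega> \<longleftrightarrow> holomorphic_in f \<Omega> \<and> (\<forall>z. z \<notin> \<Omega> \<longrightarrow> f z = 0)"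
  unfolding holo_def holomorphic_in_def by simp

lemma holo_holomorphic_in_cderiv_n: "f \<in> holo smul P \<Omega> \<Longrightarrow> holomorphic_in (cderiv_n smul P n f) \<Omega>"
  using holomorphic_in_cderiv_n[OF open_disc] holo_iff by blast

lemma holo_lincomb:
  assumes "f \<in> holo smul P \<Omega>" "g \<in> holo smul P \<Omega>"
  shows "(\<lambda>z. smul a (f z) + smul b (g z)) \<in> holo smul P \<Omega>"
  unfolding holo_iff
proof (intro conjI allI impI)
  have f: "holomorphic_in f \<Omega>" and g: "holomorphic_in g \<Omega>" using assms unfolding holo_iff by blast+
  show "holomorphic_in (\<lambda>z. smul a (f z) + smul b (g z)) \<Omega>"
    unfolding holomorphic_in_def
  proof
    fix z assume "z \<in> \<Omega>"
    then show "\<exists>d. has_cderiv smul P (\<lambda>z. smul a (f z) + smul b (g z)) z d"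
      using has_cderiv_lincomb[OF holomorphic_in_has_cderiv[OF f] holomorphic_in_has_cderiv[OF g]] by blast
  qed
  show "smul a (f z) + smul b (g z) = 0" if "z \<notin> \<Omega>" for z
    using assms that unfolding holo_iff by simp
qed

lemma disc_poly_holo: "disc_poly j a \<in> holo smul P \<Omega>"
  unfolding holo_iff holomorphic_in_def
proof (intro conjI allI impI ballI)
  fix z assume z: "z \<in> \<Omega>"
  define u where "u n w = (w - z0) ^ n / of_nat (fact n)" for n w
  have "(u n has_field_derivative deriv (u n) z) (at z)" for n
  proof -
    have "u n holomorphic_on UNIV" unfolding u_def by (intro holomorphic_intros) simp
    then show ?thesis
      using holomorphic_on_imp_differentiable_at[of "u n" UNIV z] DERIV_deriv_iff_field_differentiable by blast
  qed
  then have "has_cderiv smul P (\<lambda>w. \<Sum>n\<le>j. smul (u n w) (a n)) z (\<Sum>n\<le>j. smul (deriv (u n) z) (a n))"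
    by (intro has_cderiv_sum has_cderiv_scaleC) auto
  then have "has_cderiv smul P (disc_poly j a) z (\<Sum>n\<le>j. smul (deriv (u n) z) (a n))"
    by (rule has_cderiv_transform_open[OF _ open_disc z]) (simp add: disc_poly_def u_def)
  then show "\<exists>d. has_cderiv smul P (disc_poly j a) z d" by blast
qed (simp add: disc_poly_def)

lemma taylor_proj_holo: "Q k f \<in> holo smul P \<Omega>"
  unfolding taylor_proj_eq_disc_poly by (rule disc_poly_holo)

context
  fixes p \<phi> assumes p: "p \<in> P" and \<phi>: "dominated_functional p \<phi>"
begin

lemma holomorphic_on_functional_holo: "f \<in> holo smul P \<Omega> \<Longrightarrow> (\<lambda>w. \<phi> (f w)) holomorphic_on \<Omega>"
  using holomorphic_on_functional[OF p \<phi> _ open_disc] holo_iff by blast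

lemma functional_cderiv_n_centre:
  "f \<in> holo smul P \<Omega> \<Longrightarrow> \<phi> (cderiv_n smul P n f z0) = (deriv ^^ n) (\<lambda>w. \<phi> (f w)) z0"
  by (rule higher_deriv_functional[OF p \<phi> holo_holomorphic_in_cderiv_n open_disc centre_in_\<Omega>])

lemma functional_taylor_proj:
  assumes "f \<in> holo smul P \<Omega>" "z \<in> \<Omega>"
  shows "\<phi> (Q k f z) = (\<Sum>n\<le>k. (deriv ^^ n) (\<lambda>w. \<phi> (f w)) z0 / fact n * (z - z0) ^ n)"
  using assms unfolding taylor_proj_def
  by (simp add: linear_functional_sum[OF dominated_functional_linear[OF \<phi>]]
      linear_functional_smul[OF dominated_functional_linear[OF \<phi>]] functional_cderiv_n_centre mult.commute)

end

lemma cderiv_n_disc_poly: "cderiv_n smul P m (disc_poly j a) z0 = (if m \<le> j then a m else 0)"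
proof (rule eq_if_dominated_functionals_agree)
  fix p \<phi> assume p: "p \<in> P" and \<phi>: "dominated_functional p \<phi>"
  have lin: "linear_functional \<phi>" by (rule dominated_functional_linear[OF \<phi>])
  have "\<phi> (cderiv_n smul P m (disc_poly j a) z0) = (deriv ^^ m) (\<lambda>w. \<phi> (disc_poly j a w)) z0"
    by (rule functional_cderiv_n_centre[OF p \<phi> disc_poly_holo])
  also have "\<dots> = (deriv ^^ m) (\<lambda>w. \<Sum>n\<le>j. (\<phi> (a n) / of_nat (fact n)) * (w - z0) ^ n) z0"
  proof (rule higher_deriv_transform_within_open[OF _ _ open_disc centre_in_\<Omega>])
    show "(\<lambda>w. \<phi> (disc_poly j a w)) holomorphic_on \<Omega>"
      by (rule holomorphic_on_functional_holo[OF p \<phi> disc_poly_holo])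
    show "(\<lambda>w. \<Sum>n\<le>j. \<phi> (a n) / of_nat (fact n) * (w - z0) ^ n) holomorphic_on \<Omega>"
      by (intro holomorphic_intros)
  qed (simp add: disc_poly_def linear_functional_sum[OF lin] linear_functional_smul[OF lin] mult.commute)
  also have "\<dots> = (if m \<le> j then fact m * (\<phi> (a m) / of_nat (fact m)) else 0)"
    by (rule higher_deriv_polynomial_centre)
  also have "\<dots> = \<phi> (if m \<le> j then a m else 0)" by (simp add: linear_functional_zero[OF lin])
  finally show "\<phi> (cderiv_n smul P m (disc_poly j a) z0) = \<phi> (if m \<le> j then a m else 0)" .
qed

lemma taylor_proj_taylor_proj: "Q k (Q j f) = Q (min j k) f"
proof -
  have "(\<Sum>n\<le>k. smul (c n) (if n \<le> j then b n else 0)) = (\<Sum>n\<le>min j k. smul (c n) (b n))" for c b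
  proof -
    have "(\<Sum>n\<le>k. smul (c n) (if n \<le> j then b n else 0)) = (\<Sum>n\<le>k. if n \<le> j then smul (c n) (b n) else 0)"
      by (rule sum.cong) auto
    also have "\<dots> = (\<Sum>n\<in>{n\<in>{..k}. n \<le> j}. smul (c n) (b n))"
      by (rule sum.inter_filter[symmetric]) simp
    also have "{n\<in>{..k}. n \<le> j} = {..min j k}" by auto
    finally show ?thesis .
  qed
  then show ?thesis
    unfolding taylor_proj_eq_disc_poly cderiv_n_disc_poly by (auto simp: disc_poly_def)
qed

lemma cderiv_n_lincomb:
  assumes f: "f \<in> holo smul P \<Omega>" and g: "g \<in> holo smul P \<Omega>"
  shows "cderiv_n smul P n (\<lambda>z. smul a (f z) + smul b (g z)) z0 =
    smul a (cderiv_n smul P n f z0) + smul b (cderiv_n smul P n g z0)"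
proof (rule eq_if_dominated_functionals_agree)
  fix p \<phi> assume p: "p \<in> P" and \<phi>: "dominated_functional p \<phi>"
  have lin: "linear_functional \<phi>" by (rule dominated_functional_linear[OF \<phi>])
  have hf: "(\<lambda>w. \<phi> (f w)) holomorphic_on \<Omega>" by (rule holomorphic_on_functional_holo[OF p \<phi> f])
  have hg: "(\<lambda>w. \<phi> (g w)) holomorphic_on \<Omega>" by (rule holomorphic_on_functional_holo[OF p \<phi> g])
  have "\<phi> (cderiv_n smul P n (\<lambda>z. smul a (f z) + smul b (g z)) z0) =
      (deriv ^^ n) (\<lambda>w. a * \<phi> (f w) + b * \<phi> (g w)) z0"
    using functional_cderiv_n_centre[OF p \<phi> holo_lincomb[OF f g]]
    by (simp add: linear_functional_lincomb[OF lin])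
  also have "\<dots> = (deriv ^^ n) (\<lambda>w. a * \<phi> (f w)) z0 + (deriv ^^ n) (\<lambda>w. b * \<phi> (g w)) z0"
    by (rule higher_deriv_add[OF _ _ open_disc centre_in_\<Omega>]) (intro holomorphic_intros hf hg)+
  also have "\<dots> = a * (deriv ^^ n) (\<lambda>w. \<phi> (f w)) z0 + b * (deriv ^^ n) (\<lambda>w. \<phi> (g w)) z0"
    by (simp add: higher_deriv_cmult[OF hf centre_in_\<Omega> open_disc] higher_deriv_cmult[OF hg centre_in_\<Omega> open_disc])
  also have "\<dots> = \<phi> (smul a (cderiv_n smul P n f z0) + smul b (cderiv_n smul P n g z0))"
    by (simp add: linear_functional_lincomb[OF lin] functional_cderiv_n_centre[OF p \<phi> f]
        functional_cderiv_n_centre[OF p \<phi> g])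
  finally show "\<phi> (cderiv_n smul P n (\<lambda>z. smul a (f z) + smul b (g z)) z0) =
      \<phi> (smul a (cderiv_n smul P n f z0) + smul b (cderiv_n smul P n g z0))" .
qed

lemma taylor_proj_lin_on: "lin_on smul (holo smul P \<Omega>) (Q k)"
  unfolding lin_on_def
proof (intro ballI allI)
  fix f g a b assume f: "f \<in> holo smul P \<Omega>" and g: "g \<in> holo smul P \<Omega>"
  show "Q k (\<lambda>z. smul a (f z) + smul b (g z)) = (\<lambda>z. smul a (Q k f z) + smul b (Q k g z))"
    unfolding taylor_proj_eq_disc_poly cderiv_n_lincomb[OF f g]
    by (rule ext) (simp add: disc_poly_def scale_right_distrib sum.distrib scale_sum_right scale_left_commute mult.commute)
qed

lemma taylor_proj_diff:
  assumes "f \<in> holo smul P \<Omega>" "g \<in> holo smul P \<Omega>"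
  shows "Q k f z - Q k g z = Q k (\<lambda>z. f z - g z) z"
proof -
  have "Q k (\<lambda>z. smul 1 (f z) + smul (-1) (g z)) = (\<lambda>z. smul 1 (Q k f z) + smul (-1) (Q k g z))"
    using taylor_proj_lin_on assms unfolding lin_on_def by blast
  from fun_cong[OF this, of z] show ?thesis by simp
qed

lemma holo_diff: "f \<in> holo smul P \<Omega> \<Longrightarrow> g \<in> holo smul P \<Omega> \<Longrightarrow> (\<lambda>z. f z - g z) \<in> holo smul P \<Omega>"
  using holo_lincomb[of f g 1 "-1"] by simp

text \<open>A monomial of degree \<open>max j k\<close> separates \<open>Q j\<close> from \<open>Q k\<close>.\<close>

lemma taylor_proj_distinct:
  fixes x :: 'a
  assumes "k \<noteq> j" and x: "x \<noteq> 0"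
  shows "\<exists>f\<in>holo smul P \<Omega>. Q k f \<noteq> Q j f"
proof -
  define m where "m = max k j"
  define a where "a n = (if n = m then smul (of_nat (fact m)) x else 0)" for n
  define f where "f = disc_poly m a"
  obtain \<epsilon> where \<epsilon>: "0 < ereal \<epsilon>" "ereal \<epsilon> < r" using ereal_dense2[OF r_pos] by blast
  define w where "w = z0 + complex_of_real \<epsilon>"
  have w: "w \<in> \<Omega>" "w - z0 \<noteq> 0" unfolding disc_def w_def using \<epsilon> by auto
  have at_w: "Q i f w = (if m \<le> i then smul ((w - z0) ^ m) x else 0)" for i
  proof -
    have "Q i f w = (\<Sum>n\<le>i. smul ((w - z0) ^ n / of_nat (fact n)) (if n \<le> m then a n else 0))"
      unfolding taylor_proj_eq_disc_poly f_def cderiv_n_disc_poly using w(1) by (simp add: disc_poly_def)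
    also have "\<dots> = (\<Sum>n\<le>i. if n = m then smul ((w - z0) ^ m) x else 0)"
      by (rule sum.cong) (auto simp: a_def)
    finally show ?thesis by (simp add: sum.delta)
  qed
  have "smul ((w - z0) ^ m) x \<noteq> 0" using w(2) x by simp
  then have "Q k f w \<noteq> Q j f w"
    using assms(1) at_w[of k] at_w[of j] unfolding m_def by (cases "k < j") auto
  moreover have "f \<in> holo smul P \<Omega>" unfolding f_def by (rule disc_poly_holo)
  ultimately show ?thesis by metis
qed

context
  fixes f p \<rho> M
  assumes f: "f \<in> holo smul P \<Omega>" and p: "p \<in> P" and \<rho>: "ereal \<rho> < r" "\<rho> > 0"
    and M: "\<And>\<zeta>. \<zeta> \<in> cball z0 \<rho> \<Longrightarrow> p (f \<zeta>) \<le> M"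
begin

lemma seminorm_taylor_remainder_le:
  assumes s: "s < \<rho>" and z: "z \<in> cball z0 s"
  shows "p (f z - Q k f z) \<le> M * (s / \<rho>) ^ Suc k / (1 - s / \<rho>)"
proof -
  have sub: "cball z0 \<rho> \<subseteq> \<Omega>" by (rule cball_subset_disc[OF \<rho>(1)])
  have "z \<in> \<Omega>" using z s sub by auto
  obtain \<phi> where \<phi>: "dominated_functional p \<phi>" and eq: "cmod (\<phi> (f z - Q k f z)) = p (f z - Q k f z)"
    using hahn_banach[OF p] by blast
  have "\<phi> (f z - Q k f z) = \<phi> (f z) - (\<Sum>n\<le>k. (deriv ^^ n) (\<lambda>w. \<phi> (f w)) z0 / fact n * (z - z0) ^ n)"
    by (simp add: linear_functional_diff[OF dominated_functional_linear[OF \<phi>]]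
        functional_taylor_proj[OF p \<phi> f \<open>z \<in> \<Omega>\<close>])
  also have "cmod \<dots> \<le> M * (s / \<rho>) ^ Suc k / (1 - s / \<rho>)"
  proof (rule taylor_remainder_bound[OF holomorphic_on_functional_holo[OF p \<phi> f] open_disc sub \<rho>(2) _ s])
    show "cmod (\<phi> (f \<zeta>)) \<le> M" if "\<zeta> \<in> cball z0 \<rho>" for \<zeta>
      using dominated_functional_le[OF \<phi>, of "f \<zeta>"] M[OF that] by simp
    show "cmod (z - z0) \<le> s" using z by (simp add: dist_norm norm_minus_commute)
  qed
  finally show ?thesis using eq by simp
qed

lemma seminorm_taylor_proj_le:
  assumes z: "z \<in> cball z0 \<rho>"
  shows "p (Q k f z) \<le> real (Suc k) * M"
proof -
  have sub: "cball z0 \<rho> \<subseteq> \<Omega>" by (rule cball_subset_disc[OF \<rho>(1)])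
  obtain \<phi> where \<phi>: "dominated_functional p \<phi>" and eq: "cmod (\<phi> (Q k f z)) = p (Q k f z)"
    using hahn_banach[OF p] by blast
  have "cmod (\<phi> (Q k f z)) \<le> real (Suc k) * M"
    unfolding functional_taylor_proj[OF p \<phi> f subsetD[OF sub z]]
  proof (rule taylor_poly_bound[OF holomorphic_on_functional_holo[OF p \<phi> f] open_disc sub \<rho>(2)])
    show "cmod (\<phi> (f \<zeta>)) \<le> M" if "\<zeta> \<in> cball z0 \<rho>" for \<zeta>
      using dominated_functional_le[OF \<phi>, of "f \<zeta>"] M[OF that] by simp
    show "cmod (z - z0) \<le> \<rho>" using z by (simp add: dist_norm norm_minus_commute)
  qed
  then show ?thesis using eq by simp
qed

end

lemma seminorm_le_SUP_cball:
  assumes "f \<in> holo smul P \<Omega>" "p \<in> P" "ereal \<rho> < r" "\<zeta> \<in> cball z0 \<rho>"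
  shows "p (f \<zeta>) \<le> (SUP \<zeta>\<in>cball z0 \<rho>. p (f \<zeta>))"
  using holo_holomorphic_in_cderiv_n[OF assms(1), of 0] cball_subset_disc[OF assms(3)] assms(2,4)
  by (intro seminorm_le_SUP[OF _ open_disc compact_cball]) simp_all

lemma limitin_taylor_proj:
  assumes f: "f \<in> holo smul P \<Omega>"
  shows "limitin (holo_topology smul P \<Omega>) (\<lambda>k. Q k f) f sequentially"
  unfolding holo_topology_def
proof (rule limitin_pm_topologyI)
  show "eventually (\<lambda>k. Q k f \<in> holo smul P \<Omega>) sequentially" using taylor_proj_holo by simp
  fix d and e :: real
  assume "d \<in> {(\<lambda>f g. SUP z\<in>K. p (f z - g z)) | K p. compact K \<and> K \<noteq> {} \<and> K \<subseteq> \<Omega> \<and> p \<in> P}" "e > 0"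
  then obtain K p where d: "d = (\<lambda>f g. SUP z\<in>K. p (f z - g z))" and K: "compact K" "K \<noteq> {}" "K \<subseteq> \<Omega>"
    and p: "p \<in> P" by blast
  obtain s \<rho> where s: "0 \<le> s" "s < \<rho>" and \<rho>: "ereal \<rho> < r" and Ks: "K \<subseteq> cball z0 s"
    using compact_subset_disc[OF K(1,3) r_pos] by blast
  define M where "M = (SUP \<zeta>\<in>cball z0 \<rho>. p (f \<zeta>))"
  have M: "p (f \<zeta>) \<le> M" if "\<zeta> \<in> cball z0 \<rho>" for \<zeta>
    unfolding M_def by (rule seminorm_le_SUP_cball[OF f p \<rho> that])
  define q where "q = s / \<rho>"
  have q: "0 \<le> q" "q < 1" unfolding q_def using s by auto
  have "(\<lambda>k. M * q ^ Suc k / (1 - q)) \<longlonglongrightarrow> 0"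
    using q by (intro tendsto_divide_zero tendsto_mult_right_zero LIMSEQ_Suc LIMSEQ_power_zero) auto
  then have "eventually (\<lambda>k. M * q ^ Suc k / (1 - q) < e) sequentially"
    using \<open>e > 0\<close> by (rule order_tendstoD)
  then show "eventually (\<lambda>k. d f (Q k f) < e) sequentially"
  proof eventually_elim
    case (elim k)
    have "d f (Q k f) \<le> M * q ^ Suc k / (1 - q)"
      unfolding d q_def
    proof (rule cSUP_least[OF K(2)])
      fix z assume "z \<in> K"
      then show "p (f z - Q k f z) \<le> M * (s / \<rho>) ^ Suc k / (1 - s / \<rho>)"
        using s Ks M by (intro seminorm_taylor_remainder_le[OF f p \<rho>]) auto
    qed
    then show ?case using elim by simp
  qed
qed (rule f)

lemma continuous_map_taylor_proj:
  "continuous_map (holo_topology smul P \<Omega>) (holo_topology smul P \<Omega>) (Q k)"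
  unfolding holo_topology_def
proof (rule continuous_map_pm_topologyI)
  show "Q k ` holo smul P \<Omega> \<subseteq> holo smul P \<Omega>" using taylor_proj_holo by blast
  fix f d and e :: real
  assume f: "f \<in> holo smul P \<Omega>"
    and "d \<in> {(\<lambda>f g. SUP z\<in>K. p (f z - g z)) | K p. compact K \<and> K \<noteq> {} \<and> K \<subseteq> \<Omega> \<and> p \<in> P}" "e > 0"
  then obtain K p where d: "d = (\<lambda>f g. SUP z\<in>K. p (f z - g z))" and K: "compact K" "K \<noteq> {}" "K \<subseteq> \<Omega>"
    and p: "p \<in> P" by blast
  obtain s \<rho> where s: "0 \<le> s" "s < \<rho>" and \<rho>: "ereal \<rho> < r" and Ks: "K \<subseteq> cball z0 s"
    using compact_subset_disc[OF K(1,3) r_pos] by blast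
  define d' where "d' = (\<lambda>f g. SUP z\<in>cball z0 \<rho>. p (f z - g z))"
  have d': "d' \<in> {(\<lambda>f g. SUP z\<in>K. p (f z - g z)) | K p. compact K \<and> K \<noteq> {} \<and> K \<subseteq> \<Omega> \<and> p \<in> P}"
    unfolding d'_def using p s cball_subset_disc[OF \<rho>]
    by (intro CollectI exI[of _ "cball z0 \<rho>"] exI[of _ p]) auto
  have "d (Q k f) (Q k g) < e" if g: "g \<in> holo smul P \<Omega>" and less: "d' f g < e / real (Suc k)" for g
  proof -
    have fg: "(\<lambda>z. f z - g z) \<in> holo smul P \<Omega>" by (rule holo_diff[OF f g])
    have M: "p (f \<zeta> - g \<zeta>) \<le> d' f g" if "\<zeta> \<in> cball z0 \<rho>" for \<zeta>
      unfolding d'_def by (rule seminorm_le_SUP_cball[OF fg p \<rho> that])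
    have "d (Q k f) (Q k g) \<le> real (Suc k) * d' f g"
      unfolding d taylor_proj_diff[OF f g]
    proof (rule cSUP_least[OF K(2)])
      fix z assume "z \<in> K"
      then show "p (Q k (\<lambda>z. f z - g z) z) \<le> real (Suc k) * d' f g"
        using s Ks M by (intro seminorm_taylor_proj_le[OF fg p \<rho>]) auto
    qed
    also have "\<dots> < e" using less by (simp add: field_simps)
    finally show ?thesis .
  qed
  then show "\<exists>G \<delta>. finite G \<and> G \<subseteq> {(\<lambda>f g. SUP z\<in>K. p (f z - g z)) | K p. compact K \<and> K \<noteq> {} \<and> K \<subseteq> \<Omega> \<and> p \<in> P} \<and>
      \<delta> > 0 \<and> {g \<in> holo smul P \<Omega>. \<forall>d''\<in>G. d'' f g < \<delta>} \<subseteq> {g. d (Q k f) (Q k g) < e}"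
    using d' \<open>e > 0\<close> by (intro exI[of _ "{d'}"] exI[of _ "e / real (Suc k)"]) auto
qed

end

theorem theorem4p5:
  fixes smul :: "complex \<Rightarrow> 'a::ab_group_add \<Rightarrow> 'a"
    and P :: "('a \<Rightarrow> real) set"
    and z0 :: complex and r :: ereal
  assumes "lcHs smul P"
    and "locally_complete smul P"
    and "r > 0"
    and "\<exists>x::'a. x \<noteq> 0"
  shows "schauder_decomposition smul (holo smul P (disc z0 r))
           (holo_topology smul P (disc z0 r)) (\<lambda>k. taylor_proj smul P z0 r k)
     \<and> (\<forall>f \<in> holo smul P (disc z0 r).
          limitin (holo_topology smul P (disc z0 r)) (\<lambda>k. taylor_proj smul P z0 r k f) f sequentially)"
proof -
  interpret taylor_disc smul P z0 r
    using assms(1-3) unfolding lcHs_def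
    by (intro taylor_disc.intro locally_complete_lchs.intro lchs.intro)
      (simp_all add: lchs_axioms_def locally_complete_lchs_axioms_def taylor_disc_axioms_def)
  obtain x :: 'a where "x \<noteq> 0" using assms(4) by blast
  then have "\<forall>k j. k \<noteq> j \<longrightarrow> (\<exists>f\<in>holo smul P \<Omega>. Q k f \<noteq> Q j f)"
    using taylor_proj_distinct by blast
  then show ?thesis
    unfolding schauder_decomposition_def
    by (simp add: continuous_map_taylor_proj taylor_proj_lin_on taylor_proj_taylor_proj limitin_taylor_proj)
qed

end
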